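(* Let $\kappa<\lambda$ be infinite regular cardinals. Then $\mathbb{P}(\lambda,\kappa)$ is $\lambda$-strategically closed.
   Context: For a set $C$ of ordinals, $C'=\{\alpha\in C\mid\sup(C\cap\alpha)=\alpha\}$. $\mathbb{P}(\lambda,\kappa)$ consists of conditions $p=\langle C^p_{\alpha,i}\mid\alpha\le\gamma^p,\ i(\alpha)^p\le i<\kappa\rangle$ such that: (1) $\gamma^p<\lambda$ is a limit ordinal and for all limit $\alpha\le\gamma^p$, $i(\alpha)^p<\kappa$; (2) for limit $\alpha\le\gamma^p$ and $i(\alpha)^p\le i<\kappa$, $C^p_{\alpha,i}$ is club in $\alpha$; (3) for limit $\alpha\le\gamma^p$ and $i(\alpha)^p\le i<j<\kappa$, $C^p_{\alpha,i}\subseteq C^p_{\alpha,j}$; (4) for limit $\alpha<\beta\le\gamma^p$ and $i(\beta)^p\le i<\kappa$, if $\alpha\in(C^p_{\beta,i})'$ then $i(\alpha)^p\le i$ and $C^p_{\beta,i}\cap\alpha=C^p_{\alpha,i}$; (5) for limit $\alpha<\beta\le\gamma^p$ there is $i<\kappa$ with $\alpha\in(C^p_{\beta,i})'$. The order is end-extension: $q\le p$ iff $\gamma^q\ge\gamma^p$ and for all limit $\alpha\le\gamma^p$, $i(\alpha)^q=i(\alpha)^p$ and $C^q_{\alpha,i}=C^p_{\alpha,i}$ for $i(\alpha)^p\le i<\kappa$. For a poset $\mathbb{P}$ and ordinal $\beta$, the game $G_\beta(\mathbb{P})$: players I and II alternately choose a decreasing sequence $\langle p_\alpha\mid\alpha<\beta\rangle$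 in $\mathbb{P}$ with $p_0=\mathbb{1}_{\mathbb{P}}$; I plays at odd stages and II at even stages (including all limit stages); I wins if at some even stage $\alpha<\beta$ II cannot play, otherwise II wins. $\mathbb{P}$ is $\beta$-strategically closed if II has a winning strategy in $G_\beta(\mathbb{P})$. *)

theory Defs
  imports Main
begin

text \<open>Ordinals below lambda are represented by the elements of a type 'a carrying
a well-order r (non-strict) on UNIV whose order type is lambda.\<close>

definition olt :: "'a rel \<Rightarrow> 'a \<Rightarrow> 'a \<Rightarrow> bool" where
  "olt r a b \<equiv> (a, b) \<in> r \<and> a \<noteq> b"

definition ozero :: "'a rel \<Rightarrow> 'a \<Rightarrow> bool" where
  "ozero r a \<equiv> (\<forall>b. (a, b) \<in> r)"

definition oLimit :: "'a rel \<Rightarrow> 'a \<Rightarrow> bool" where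
  "oLimit r a \<equiv> \<not> ozero r a \<and> (\<forall>b. olt r b a \<longrightarrow> (\<exists>c. olt r b c \<and> olt r c a))"

definition oSucc :: "'a rel \<Rightarrow> 'a \<Rightarrow> 'a \<Rightarrow> bool" where
  "oSucc r a b \<equiv> olt r a b \<and> \<not> (\<exists>c. olt r a c \<and> olt r c b)"

inductive oEven :: "'a rel \<Rightarrow> 'a \<Rightarrow> bool" for r where
  base: "ozero r a \<or> oLimit r a \<Longrightarrow> oEven r a"
| step: "oEven r a \<Longrightarrow> oSucc r a b \<Longrightarrow> oSucc r b c \<Longrightarrow> oEven r c"

text \<open>sup (C \<inter> a) = a\<close>
definition supEq :: "'a rel \<Rightarrow> 'a set \<Rightarrow> 'a \<Rightarrow> bool" where
  "supEq r C a \<equiv> (\<forall>b. olt r b a \<longrightarrow> (\<exists>c\<in>C. olt r b c \<and> olt r c a))"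

definition derivedSet :: "'a rel \<Rightarrow> 'a set \<Rightarrow> 'a set" where
  "derivedSet r C = {a \<in> C. supEq r C a}"

definition clubIn :: "'a rel \<Rightarrow> 'a set \<Rightarrow> 'a \<Rightarrow> bool" where
  "clubIn r C a \<equiv> C \<subseteq> {b. olt r b a}
     \<and> (\<forall>b. olt r b a \<longrightarrow> (\<exists>c\<in>C. olt r b c))
     \<and> (\<forall>b. olt r b a \<longrightarrow> \<not> ozero r b \<longrightarrow> supEq r C b \<longrightarrow> b \<in> C)"

text \<open>A condition is a triple (gamma, i(.), C(.,.)); outside the relevant indices the
entries are normalised (i = undefined, C = {}) so that conditions are canonical.
The ordinal kappa is represented by the element k (kappa = order type below k).\<close>
type_synonym 'a cond = "'a \<times> ('a \<Rightarrow> 'a) \<times> ('a \<Rightarrow> 'a \<Rightarrow> 'a set)"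

definition gam :: "'a cond \<Rightarrow> 'a" where "gam p = fst p"
definition idx :: "'a cond \<Rightarrow> 'a \<Rightarrow> 'a" where "idx p = fst (snd p)"
definition cl :: "'a cond \<Rightarrow> 'a \<Rightarrow> 'a \<Rightarrow> 'a set" where "cl p = snd (snd p)"

definition inP :: "'a rel \<Rightarrow> 'a \<Rightarrow> 'a cond \<Rightarrow> bool" where
  "inP r k p \<equiv>
     (ozero r (gam p) \<or> oLimit r (gam p))
   \<and> (\<forall>a. oLimit r a \<and> (a, gam p) \<in> r \<longrightarrow>
          olt r (idx p a) k
        \<and> (\<forall>i. (idx p a, i) \<in> r \<and> olt r i k \<longrightarrow> clubIn r (cl p a i) a)
        \<and> (\<forall>i j. (idx p a, i) \<in> r \<and> olt r i j \<and> olt r j k \<longrightarrow> cl p a i \<subseteq> cl p a j)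
        \<and> (\<forall>i. \<not> ((idx p a, i) \<in> r \<and> olt r i k) \<longrightarrow> cl p a i = {}))
   \<and> (\<forall>a b. oLimit r a \<and> oLimit r b \<and> olt r a b \<and> (b, gam p) \<in> r \<longrightarrow>
          (\<forall>i. (idx p b, i) \<in> r \<and> olt r i k \<and> a \<in> derivedSet r (cl p b i) \<longrightarrow>
               (idx p a, i) \<in> r \<and> cl p b i \<inter> {d. olt r d a} = cl p a i))
   \<and> (\<forall>a b. oLimit r a \<and> oLimit r b \<and> olt r a b \<and> (b, gam p) \<in> r \<longrightarrow>
          (\<exists>i. (idx p b, i) \<in> r \<and> olt r i k \<and> a \<in> derivedSet r (cl p b i)))
   \<and> (\<forall>a. \<not> (oLimit r a \<and> (a, gam p) \<in> r) \<longrightarrow> idx p a = undefined \<and> (\<forall>i. cl p a i = {}))"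

definition PP :: "'a rel \<Rightarrow> 'a \<Rightarrow> 'a cond set" where
  "PP r k = {p. inP r k p}"

definition leP :: "'a rel \<Rightarrow> 'a \<Rightarrow> 'a cond \<Rightarrow> 'a cond \<Rightarrow> bool" where
  "leP r k q p \<equiv> (gam p, gam q) \<in> r
     \<and> (\<forall>a. oLimit r a \<and> (a, gam p) \<in> r \<longrightarrow>
          idx q a = idx p a \<and> (\<forall>i. (idx p a, i) \<in> r \<and> olt r i k \<longrightarrow> cl q a i = cl p a i))"

definition oneP :: "'a rel \<Rightarrow> 'a cond" where
  "oneP r = ((SOME z. ozero r z), (\<lambda>_. undefined), (\<lambda>_ _. {}))"

text \<open>The game G_lambda(P) of length lambda = order type of r.  A strategy for II maps a
stage a and the history (restricted to stages below a) to a condition.\<close>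
definition hist :: "'a rel \<Rightarrow> ('a \<Rightarrow> 'c) \<Rightarrow> 'a \<Rightarrow> ('a \<Rightarrow> 'c)" where
  "hist r h a = (\<lambda>d. if olt r d a then h d else undefined)"

definition legalPartial ::
  "'a rel \<Rightarrow> 'c set \<Rightarrow> ('c \<Rightarrow> 'c \<Rightarrow> bool) \<Rightarrow> 'c \<Rightarrow> ('a \<Rightarrow> ('a \<Rightarrow> 'c) \<Rightarrow> 'c)
     \<Rightarrow> ('a \<Rightarrow> 'c) \<Rightarrow> 'a \<Rightarrow> bool" where
  "legalPartial r P le one \<sigma> h a \<equiv>
     (\<forall>d. olt r d a \<longrightarrow> h d \<in> P)
   \<and> (\<forall>d d'. olt r d d' \<and> olt r d' a \<longrightarrow> le (h d') (h d))
   \<and> (\<forall>d. olt r d a \<longrightarrow> ozero r d \<longrightarrow> h d = one)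
   \<and> (\<forall>d. olt r d a \<longrightarrow> oEven r d \<longrightarrow> \<not> ozero r d \<longrightarrow> h d = \<sigma> d (hist r h d))"

definition winningII ::
  "'a rel \<Rightarrow> 'c set \<Rightarrow> ('c \<Rightarrow> 'c \<Rightarrow> bool) \<Rightarrow> 'c \<Rightarrow> ('a \<Rightarrow> ('a \<Rightarrow> 'c) \<Rightarrow> 'c) \<Rightarrow> bool" where
  "winningII r P le one \<sigma> \<equiv>
     \<forall>h a. oEven r a \<and> \<not> ozero r a \<and> legalPartial r P le one \<sigma> h a \<longrightarrow>
        \<sigma> a (hist r h a) \<in> P \<and> (\<forall>d. olt r d a \<longrightarrow> le (\<sigma> a (hist r h a)) (h d))"

definition strategically_closed ::
  "'a rel \<Rightarrow> 'c set \<Rightarrow> ('c \<Rightarrow> 'c \<Rightarrow> bool) \<Rightarrow> 'c \<Rightarrow> bool" where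
  "strategically_closed r P le one \<equiv> (\<exists>\<sigma>. winningII r P le one \<sigma>)"

end

theory Submission
  imports Defs
begin

unbundle cardinal_syntax

text \<open>Player II keeps the tops of its moves at limit ordinals with index \<open>0\<close> and makes the
  top of every earlier even move a limit point of every later top club with index \<open>0\<close>.  At a
  successor stage it answers I's move \<open>pb \<le> pc\<close> by a new top level at the next limit above
  the top of \<open>pb\<close>: from a suitable index \<open>j\<close> on the new clubs continue the top clubs of
  \<open>pb\<close>, below \<open>j\<close> they continue those of \<open>pc\<close> together with the top of \<open>pc\<close>, and the
  interval up to the new top is appended.  At a limit stage the earlier even tops are cofinal
  in their supremum, which is below \<open>\<lambda>\<close> by regularity, and by the invariant the top clubs
  of the earlier even moves end-extend each other, so their unions are the new top clubs.\<close>

section \<open>The well-order of stages\<close>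

locale ordinal_universe =
  fixes r :: "'a rel"
  assumes well_order: "well_order_on UNIV r"
begin

abbreviation lt where "lt a b \<equiv> olt r a b"
abbreviation le where "le a b \<equiv> (a, b) \<in> r"

lemma Field_r: "Field r = UNIV"
  using well_order well_order_on_Field by blast

lemma wo_rel_r: "wo_rel r"
  using well_order Field_r unfolding wo_rel_def by simp

lemma le_refl [simp]: "le a a"
  using wo_rel.REFL[OF wo_rel_r] Field_r unfolding refl_on_def by blast

lemma le_trans: "le a b \<Longrightarrow> le b c \<Longrightarrow> le a c"
  using wo_rel.TRANS[OF wo_rel_r] unfolding trans_def by blast

lemma le_antisym: "le a b \<Longrightarrow> le b a \<Longrightarrow> a = b"
  using wo_rel.ANTISYM[OF wo_rel_r] unfolding antisym_def by blast

lemma le_total: "le a b \<or> le b a"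
  using wo_rel.TOTALS[OF wo_rel_r] Field_r by blast

lemma not_le: "\<not> le a b \<longleftrightarrow> lt b a"
  unfolding olt_def using le_total le_antisym by blast

lemma not_lt: "\<not> lt a b \<longleftrightarrow> le b a"
  using not_le[of b a] by blast

lemma lt_imp_le: "lt a b \<Longrightarrow> le a b"
  unfolding olt_def by simp

lemma lt_irrefl [simp]: "\<not> lt a a"
  unfolding olt_def by simp

lemma lt_trans: "lt a b \<Longrightarrow> lt b c \<Longrightarrow> lt a c"
  unfolding olt_def using le_trans le_antisym by blast

lemma lt_le_trans: "lt a b \<Longrightarrow> le b c \<Longrightarrow> lt a c"
  unfolding olt_def using le_trans le_antisym by blast

lemma le_lt_trans: "le a b \<Longrightarrow> lt b c \<Longrightarrow> lt a c"
  unfolding olt_def using le_trans le_antisym by blast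

lemma lt_linear: "lt a b \<or> a = b \<or> lt b a"
  unfolding olt_def using le_total by blast

lemma le_neq_lt: "le a b \<Longrightarrow> a \<noteq> b \<Longrightarrow> lt a b"
  unfolding olt_def by simp

lemma lt_induct [case_names less]:
  assumes "\<And>x. (\<And>y. lt y x \<Longrightarrow> P y) \<Longrightarrow> P x"
  shows "P a"
proof -
  have "{(a, b). lt a b} = r - Id"
    unfolding olt_def by auto
  then have "wf {(a, b). lt a b}"
    using wo_rel.WF[OF wo_rel_r] by simp
  then show ?thesis
    using assms by (rule wf_induct_rule) simp
qed

abbreviation least :: "('a \<Rightarrow> bool) \<Rightarrow> 'a" where
  "least P \<equiv> wo_rel.minim r (Collect P)"

lemma least_in: "P x \<Longrightarrow> P (least P)"
  using wo_rel.minim_in[OF wo_rel_r, of "Collect P"] Field_r by blast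

lemma least_le: "P y \<Longrightarrow> le (least P) y"
  using wo_rel.minim_least[OF wo_rel_r, of "Collect P"] Field_r by blast

lemma lt_not_zero: "lt b a \<Longrightarrow> \<not> ozero r a"
  unfolding ozero_def using not_lt by blast

lemma ex_zero: "\<exists>z. ozero r z"
  using least_le[of "\<lambda>_. True"] unfolding ozero_def by blast

definition ord0 :: 'a where
  "ord0 = (SOME z. ozero r z)"

lemma ozero_ord0: "ozero r ord0"
  unfolding ord0_def using ex_zero by (rule someI_ex)

lemma ord0_le [simp]: "le ord0 a"
  using ozero_ord0 unfolding ozero_def by simp

lemma ozero_iff_eq_ord0: "ozero r a \<longleftrightarrow> a = ord0"
  using ozero_ord0 le_antisym unfolding ozero_def by blast

lemma gam_oneP: "gam (oneP r) = ord0"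
  unfolding oneP_def gam_def ord0_def by simp

lemma oSucc_lt: "oSucc r b a \<Longrightarrow> lt b a"
  unfolding oSucc_def by blast

lemma oSucc_pred_unique: "oSucc r b a \<Longrightarrow> oSucc r b' a \<Longrightarrow> b = b'"
  unfolding oSucc_def using lt_linear by blast

lemma oSucc_not_limit: "oSucc r b a \<Longrightarrow> \<not> oLimit r a"
  unfolding oSucc_def oLimit_def by blast

lemma oSucc_not_zero: "oSucc r b a \<Longrightarrow> \<not> ozero r a"
  using oSucc_lt lt_not_zero by blast

lemma oSucc_le_of_lt: "oSucc r b a \<Longrightarrow> lt b y \<Longrightarrow> le a y"
  unfolding oSucc_def using not_le by blast

lemma le_of_lt_oSucc: "oSucc r b a \<Longrightarrow> lt y a \<Longrightarrow> le y b"
  unfolding oSucc_def using not_le by blast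

lemma ex_pred_of_not_limit: "\<not> ozero r a \<Longrightarrow> \<not> oLimit r a \<Longrightarrow> \<exists>b. oSucc r b a"
  unfolding oLimit_def oSucc_def by blast

lemma oSucc_lt_limit:
  assumes "oLimit r a" "lt b a" "oSucc r b s"
  shows "lt s a"
proof -
  obtain c where "lt b c" "lt c a"
    using assms(1,2) unfolding oLimit_def by blast
  then show ?thesis
    using oSucc_le_of_lt[OF assms(3)] le_lt_trans by blast
qed

lemma limit_not_zero: "oLimit r a \<Longrightarrow> \<not> ozero r a"
  unfolding oLimit_def by simp

lemma limit_le_limit_or_zero:
  assumes "oLimit r a" "le a b" "ozero r b \<or> oLimit r b"
  shows "oLimit r b"
proof (rule ccontr)
  assume "\<not> oLimit r b"
  with assms(3) have "le b a"
    unfolding ozero_def by simp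
  with assms(1,2) \<open>\<not> oLimit r b\<close> show False
    using le_antisym by blast
qed

lemma oEven_or_succ_oEven: "oEven r x \<or> (\<exists>e. oEven r e \<and> oSucc r e x)"
proof (induct x rule: lt_induct)
  case (less x)
  show ?case
  proof (cases "ozero r x \<or> oLimit r x")
    case True
    then show ?thesis by (simp add: oEven.base)
  next
    case False
    then obtain p where p: "oSucc r p x"
      using ex_pred_of_not_limit by blast
    from less[OF oSucc_lt[OF p]] show ?thesis
    proof
      assume "\<exists>e. oEven r e \<and> oSucc r e p"
      then obtain e where "oEven r e" "oSucc r e p"
        by blast
      then have "oEven r x"
        using p by (rule oEven.step)
      then show ?thesis ..
    qed (use p in blast)
  qed
qed

lemma oEven_cases:
  assumes "oEven r a"
  obtains "ozero r a" | "oLimit r a" | c b where "oEven r c" "oSucc r c b" "oSucc r b a"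
  using assms by (cases rule: oEven.cases) auto

lemma oSucc_oEven_not_oEven: "oEven r x \<Longrightarrow> oSucc r x y \<Longrightarrow> \<not> oEven r y"
proof (induct x arbitrary: y rule: lt_induct)
  case (less x)
  show ?case
  proof
    assume "oEven r y"
    then show False
    proof (cases rule: oEven_cases)
      case (3 w v)
      then have "v = x"
        using oSucc_pred_unique less.prems(2) by blast
      with 3 have "lt w x" "oSucc r w x"
        using oSucc_lt by auto
      then show False
        using less.hyps 3(1) less.prems(1) by blast
    qed (use less.prems(2) oSucc_not_zero oSucc_not_limit in auto)
  qed
qed

section \<open>Clubs and derived sets\<close>

lemma supEq_mono: "supEq r C x \<Longrightarrow> C \<subseteq> D \<Longrightarrow> supEq r D x"
  unfolding supEq_def by blast

lemma derivedSet_mono: "x \<in> derivedSet r C \<Longrightarrow> C \<subseteq> D \<Longrightarrow> x \<in> derivedSet r D"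
  unfolding derivedSet_def using supEq_mono by blast

lemma supEq_Int_below:
  assumes "le x y"
  shows "supEq r (C \<inter> {d. lt d y}) x \<longleftrightarrow> supEq r C x"
proof
  assume "supEq r C x"
  then show "supEq r (C \<inter> {d. lt d y}) x"
    unfolding supEq_def using lt_le_trans[OF _ assms] by fastforce
qed (rule supEq_mono, auto)

lemma derivedSet_Int_below:
  assumes "lt x y" "D = C \<inter> {d. lt d y}"
  shows "x \<in> derivedSet r D \<longleftrightarrow> x \<in> derivedSet r C"
  using supEq_Int_below[OF lt_imp_le[OF assms(1)], of C] assms unfolding derivedSet_def by auto

lemma supEq_not_bounded: "supEq r C b \<Longrightarrow> (\<And>c. c \<in> C \<Longrightarrow> le c g) \<Longrightarrow> \<not> lt g b"
  unfolding supEq_def using not_le by blast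

lemma not_supEq_empty: "\<not> ozero r b \<Longrightarrow> \<not> supEq r {} b"
  unfolding supEq_def using ozero_iff_eq_ord0 le_neq_lt[OF ord0_le, of b] by auto

lemma clubIn_lt: "clubIn r C a \<Longrightarrow> c \<in> C \<Longrightarrow> lt c a"
  unfolding clubIn_def by blast

lemma clubIn_closed: "clubIn r C a \<Longrightarrow> lt b a \<Longrightarrow> \<not> ozero r b \<Longrightarrow> supEq r C b \<Longrightarrow> b \<in> C"
  unfolding clubIn_def by blast

lemma clubIn_supEq: "clubIn r C a \<Longrightarrow> supEq r C a"
  unfolding clubIn_def supEq_def by blast

lemma clubInI:
  assumes "\<And>c. c \<in> C \<Longrightarrow> lt c a"
    and "\<And>b. lt b a \<Longrightarrow> \<exists>c\<in>C. lt b c"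
    and "\<And>b. lt b a \<Longrightarrow> \<not> ozero r b \<Longrightarrow> supEq r C b \<Longrightarrow> b \<in> C"
  shows "clubIn r C a"
  unfolding clubIn_def using assms by blast

lemma limit_in_derivedSet:
  assumes "clubIn r C a" "a \<in> D" "C \<subseteq> D"
  shows "a \<in> derivedSet r D"
  unfolding derivedSet_def using supEq_mono[OF clubIn_supEq[OF assms(1)] assms(3)] assms(2) by simp

lemma clubIn_insert_closed:
  assumes club: "clubIn r C g" and b: "\<not> ozero r b" "supEq r (insert g C) b"
  shows "b \<in> insert g C"
proof -
  have bounded: "le c g" if "c \<in> insert g C" for c
    using that clubIn_lt[OF club] lt_imp_le by auto
  consider "lt g b" | "b = g" | "lt b g"
    using lt_linear by blast
  then show ?thesis
  proof cases
    case 1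
    then show ?thesis
      using supEq_not_bounded[OF b(2) bounded] by blast
  next
    case 3
    have "insert g C \<inter> {d. lt d g} = C"
      using clubIn_lt[OF club] by auto
    then have "supEq r C b"
      using supEq_Int_below[OF lt_imp_le[OF 3], of "insert g C"] b(2) by simp
    then show ?thesis
      using clubIn_closed[OF club 3 b(1)] by blast
  qed simp
qed

section \<open>Conditions\<close>

lemma inP_levelD:
  assumes "inP r k p" and a: "oLimit r a" "le a (gam p)"
  shows inP_idx_lt: "lt (idx p a) k"
    and inP_clubIn: "le (idx p a) i \<Longrightarrow> lt i k \<Longrightarrow> clubIn r (cl p a i) a"
    and inP_cl_strict_mono: "le (idx p a) i \<Longrightarrow> lt i j \<Longrightarrow> lt j k \<Longrightarrow> cl p a i \<subseteq> cl p a j"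
    and inP_cl_empty: "\<not> (le (idx p a) i \<and> lt i k) \<Longrightarrow> cl p a i = {}"
proof -
  have level: "lt (idx p a) k
      \<and> (\<forall>i. le (idx p a) i \<and> lt i k \<longrightarrow> clubIn r (cl p a i) a)
      \<and> (\<forall>i j. le (idx p a) i \<and> lt i j \<and> lt j k \<longrightarrow> cl p a i \<subseteq> cl p a j)
      \<and> (\<forall>i. \<not> (le (idx p a) i \<and> lt i k) \<longrightarrow> cl p a i = {})"
    using spec[OF conjunct1[OF conjunct2[OF assms(1)[unfolded inP_def]]], of a] a by simp
  show "lt (idx p a) k"
    using conjunct1[OF level] .
  show "le (idx p a) i \<Longrightarrow> lt i k \<Longrightarrow> clubIn r (cl p a i) a"
    using spec[OF conjunct1[OF conjunct2[OF level]], of i] by simp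
  show "le (idx p a) i \<Longrightarrow> lt i j \<Longrightarrow> lt j k \<Longrightarrow> cl p a i \<subseteq> cl p a j"
    using spec[OF spec[OF conjunct1[OF conjunct2[OF conjunct2[OF level]]], of i], of j] by simp
  show "\<not> (le (idx p a) i \<and> lt i k) \<Longrightarrow> cl p a i = {}"
    using spec[OF conjunct2[OF conjunct2[OF conjunct2[OF level]]], of i] by simp
qed

lemma inP_coherenceD:
  assumes "inP r k p" and ab: "oLimit r a" "oLimit r b" "lt a b" "le b (gam p)"
  shows inP_coherent: "le (idx p b) i \<Longrightarrow> lt i k \<Longrightarrow> a \<in> derivedSet r (cl p b i) \<Longrightarrow>
        le (idx p a) i \<and> cl p b i \<inter> {d. lt d a} = cl p a i"
    and inP_covered: "\<exists>i. le (idx p b) i \<and> lt i k \<and> a \<in> derivedSet r (cl p b i)"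
proof -
  note A = conjunct2[OF conjunct2[OF assms(1)[unfolded inP_def]]]
  show "le (idx p b) i \<Longrightarrow> lt i k \<Longrightarrow> a \<in> derivedSet r (cl p b i) \<Longrightarrow>
      le (idx p a) i \<and> cl p b i \<inter> {d. lt d a} = cl p a i"
    using spec[OF mp[OF spec[OF spec[OF conjunct1[OF A], of a], of b]], of i] ab by simp
  show "\<exists>i. le (idx p b) i \<and> lt i k \<and> a \<in> derivedSet r (cl p b i)"
    using spec[OF spec[OF conjunct1[OF conjunct2[OF A]], of a], of b] ab by simp
qed

lemma inP_outsideD:
  assumes "inP r k p"
  shows inP_gam: "ozero r (gam p) \<or> oLimit r (gam p)"
    and inP_idx_outside: "\<not> (oLimit r a \<and> le a (gam p)) \<Longrightarrow> idx p a = undefined"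
    and inP_cl_outside: "\<not> (oLimit r a \<and> le a (gam p)) \<Longrightarrow> cl p a i = {}"
proof -
  note A = assms[unfolded inP_def]
  show "ozero r (gam p) \<or> oLimit r (gam p)"
    using conjunct1[OF A] .
  note outside = conjunct2[OF conjunct2[OF conjunct2[OF conjunct2[OF A]]]]
  show "\<not> (oLimit r a \<and> le a (gam p)) \<Longrightarrow> idx p a = undefined"
    and "\<not> (oLimit r a \<and> le a (gam p)) \<Longrightarrow> cl p a i = {}"
    using spec[OF outside, of a] by simp_all
qed

lemma inP_cl_mono:
  assumes "inP r k p" "oLimit r a" "le a (gam p)" "le (idx p a) i" "le i j" "lt j k"
  shows "cl p a i \<subseteq> cl p a j"
  using inP_cl_strict_mono[OF assms(1-4) _ assms(6)] assms(5) le_neq_lt by (cases "i = j") auto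

lemma inP_cl_lt:
  assumes "inP r k p" "c \<in> cl p a i"
  shows "lt c a"
proof -
  have "oLimit r a \<and> le a (gam p)"
    using inP_cl_outside[OF assms(1)] assms(2) by blast
  moreover have "le (idx p a) i \<and> lt i k"
    using inP_cl_empty[OF assms(1)] assms(2) calculation by blast
  ultimately show ?thesis
    using inP_clubIn[OF assms(1)] clubIn_lt assms(2) by blast
qed

definition inP_at :: "'a \<Rightarrow> 'a cond \<Rightarrow> 'a \<Rightarrow> bool" where
  "inP_at k p b \<longleftrightarrow>
     lt (idx p b) k
   \<and> (\<forall>i. le (idx p b) i \<and> lt i k \<longrightarrow> clubIn r (cl p b i) b)
   \<and> (\<forall>i j. le (idx p b) i \<and> lt i j \<and> lt j k \<longrightarrow> cl p b i \<subseteq> cl p b j)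
   \<and> (\<forall>i. \<not> (le (idx p b) i \<and> lt i k) \<longrightarrow> cl p b i = {})
   \<and> (\<forall>a i. oLimit r a \<and> lt a b \<and> le (idx p b) i \<and> lt i k \<and> a \<in> derivedSet r (cl p b i) \<longrightarrow>
          le (idx p a) i \<and> cl p b i \<inter> {d. lt d a} = cl p a i)
   \<and> (\<forall>a. oLimit r a \<and> lt a b \<longrightarrow> (\<exists>i. le (idx p b) i \<and> lt i k \<and> a \<in> derivedSet r (cl p b i)))"

lemma inP_atI:
  assumes "lt (idx p b) k"
    and "\<And>i. le (idx p b) i \<Longrightarrow> lt i k \<Longrightarrow> clubIn r (cl p b i) b"
    and "\<And>i j. le (idx p b) i \<Longrightarrow> lt i j \<Longrightarrow> lt j k \<Longrightarrow> cl p b i \<subseteq> cl p b j"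
    and "\<And>i. \<not> (le (idx p b) i \<and> lt i k) \<Longrightarrow> cl p b i = {}"
    and "\<And>a i. oLimit r a \<Longrightarrow> lt a b \<Longrightarrow> le (idx p b) i \<Longrightarrow> lt i k \<Longrightarrow> a \<in> derivedSet r (cl p b i) \<Longrightarrow>
           le (idx p a) i \<and> cl p b i \<inter> {d. lt d a} = cl p a i"
    and "\<And>a. oLimit r a \<Longrightarrow> lt a b \<Longrightarrow> \<exists>i. le (idx p b) i \<and> lt i k \<and> a \<in> derivedSet r (cl p b i)"
  shows "inP_at k p b"
  unfolding inP_at_def
  by (intro conjI allI impI; (elim conjE)?) (fact assms | rule assms; assumption | simp add: assms)+

lemma inP_atD:
  assumes "inP_at k p b"
  shows "lt (idx p b) k"
    and "le (idx p b) i \<Longrightarrow> lt i k \<Longrightarrow> clubIn r (cl p b i) b"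
    and "le (idx p b) i \<Longrightarrow> lt i j \<Longrightarrow> lt j k \<Longrightarrow> cl p b i \<subseteq> cl p b j"
    and "\<not> (le (idx p b) i \<and> lt i k) \<Longrightarrow> cl p b i = {}"
    and "oLimit r a \<Longrightarrow> lt a b \<Longrightarrow> le (idx p b) i \<Longrightarrow> lt i k \<Longrightarrow> a \<in> derivedSet r (cl p b i) \<Longrightarrow>
           le (idx p a) i \<and> cl p b i \<inter> {d. lt d a} = cl p a i"
    and "oLimit r a \<Longrightarrow> lt a b \<Longrightarrow> \<exists>i. le (idx p b) i \<and> lt i k \<and> a \<in> derivedSet r (cl p b i)"
proof -
  note A = assms[unfolded inP_at_def]
  note A2 = conjunct2[OF A]
  note A3 = conjunct2[OF A2]
  note A4 = conjunct2[OF A3]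
  note A5 = conjunct2[OF A4]
  show "lt (idx p b) k"
    using conjunct1[OF A] .
  show "le (idx p b) i \<Longrightarrow> lt i k \<Longrightarrow> clubIn r (cl p b i) b"
    using conjunct1[OF A2] by simp
  show "le (idx p b) i \<Longrightarrow> lt i j \<Longrightarrow> lt j k \<Longrightarrow> cl p b i \<subseteq> cl p b j"
    using conjunct1[OF A3] by simp
  show "\<not> (le (idx p b) i \<and> lt i k) \<Longrightarrow> cl p b i = {}"
    using conjunct1[OF A4] by simp
  show "oLimit r a \<Longrightarrow> lt a b \<Longrightarrow> le (idx p b) i \<Longrightarrow> lt i k \<Longrightarrow> a \<in> derivedSet r (cl p b i) \<Longrightarrow>
      le (idx p a) i \<and> cl p b i \<inter> {d. lt d a} = cl p a i"
    using spec[OF spec[OF conjunct1[OF A5], of a], of i] by simp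
  show "oLimit r a \<Longrightarrow> lt a b \<Longrightarrow> \<exists>i. le (idx p b) i \<and> lt i k \<and> a \<in> derivedSet r (cl p b i)"
    using spec[OF conjunct2[OF A5], of a] by simp
qed

lemma inP_at_if_inP:
  assumes "inP r k p" "oLimit r b" "le b (gam p)"
  shows "inP_at k p b"
  using assms by (intro inP_atI) (simp_all add: inP_levelD inP_coherenceD)

lemma inP_if_inP_at:
  assumes "ozero r (gam p) \<or> oLimit r (gam p)"
    and levels: "\<And>b. oLimit r b \<Longrightarrow> le b (gam p) \<Longrightarrow> inP_at k p b"
    and outside: "\<And>a. \<not> (oLimit r a \<and> le a (gam p)) \<Longrightarrow> idx p a = undefined \<and> (\<forall>i. cl p a i = {})"
  shows "inP r k p"
  unfolding inP_def
proof (intro conjI allI impI)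
  fix a
  assume "oLimit r a \<and> le a (gam p)"
  then show "lt (idx p a) k"
    using inP_atD(1)[OF levels] by simp
next
  fix a i
  assume "oLimit r a \<and> le a (gam p)" "le (idx p a) i \<and> lt i k"
  then show "clubIn r (cl p a i) a"
    using inP_atD(2)[OF levels] by simp
next
  fix a i j
  assume "oLimit r a \<and> le a (gam p)" "le (idx p a) i \<and> lt i j \<and> lt j k"
  then show "cl p a i \<subseteq> cl p a j"
    using inP_atD(3)[OF levels] by simp
next
  fix a i
  assume "oLimit r a \<and> le a (gam p)" "\<not> (le (idx p a) i \<and> lt i k)"
  then show "cl p a i = {}"
    using inP_atD(4)[OF levels] by simp
next
  fix a b i
  assume "oLimit r a \<and> oLimit r b \<and> lt a b \<and> le b (gam p)"
    "le (idx p b) i \<and> lt i k \<and> a \<in> derivedSet r (cl p b i)"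
  then show "le (idx p a) i" "cl p b i \<inter> {d. lt d a} = cl p a i"
    using inP_atD(5)[OF levels[of b], of a i] by simp_all
next
  fix a b
  assume "oLimit r a \<and> oLimit r b \<and> lt a b \<and> le b (gam p)"
  then show "\<exists>i. le (idx p b) i \<and> lt i k \<and> a \<in> derivedSet r (cl p b i)"
    using inP_atD(6)[OF levels[of b], of a] by simp
next
  fix a
  assume "\<not> (oLimit r a \<and> le a (gam p))"
  then show "idx p a = undefined" "cl p a i = {}" for i
    using outside by simp_all
qed (fact assms(1))

lemma inP_at_transfer:
  assumes "inP_at k p b"
    and agree: "\<And>y. le y b \<Longrightarrow> idx q y = idx p y \<and> cl q y = cl p y"
  shows "inP_at k q b"
proof -
  have top: "idx q b = idx p b" "cl q b = cl p b"
    using agree[OF le_refl] by simp_all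
  have below: "idx q a = idx p a" "cl q a = cl p a" if "lt a b" for a
    using agree[OF lt_imp_le[OF that]] by simp_all
  show ?thesis
    by (rule inP_atI) (use inP_atD[OF assms(1)] in \<open>simp_all add: top below\<close>)
qed

lemma inP_extend_top:
  assumes "oLimit r \<gamma>" "gam q = \<gamma>"
    and below: "\<And>b. oLimit r b \<Longrightarrow> lt b \<gamma> \<Longrightarrow>
          \<exists>p. inP r k p \<and> le b (gam p) \<and> (\<forall>y. le y b \<longrightarrow> idx q y = idx p y \<and> cl q y = cl p y)"
    and top: "inP_at k q \<gamma>"
    and outside: "\<And>x. \<not> (oLimit r x \<and> le x \<gamma>) \<Longrightarrow> idx q x = undefined \<and> (\<forall>i. cl q x i = {})"
  shows "inP r k q"
proof (rule inP_if_inP_at)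
  fix b
  assume b: "oLimit r b" "le b (gam q)"
  show "inP_at k q b"
  proof (cases "b = \<gamma>")
    case False
    with b assms(2) have "lt b \<gamma>"
      by (simp add: le_neq_lt)
    then obtain p where p: "inP r k p" "le b (gam p)"
      and agree: "\<forall>y. le y b \<longrightarrow> idx q y = idx p y \<and> cl q y = cl p y"
      using below b(1) by blast
    show ?thesis
      using inP_at_transfer[OF inP_at_if_inP[OF p(1) b(1) p(2)]] agree by blast
  qed (use top in simp)
next
  show "ozero r (gam q) \<or> oLimit r (gam q)"
    using assms(1,2) by simp
next
  fix x
  assume "\<not> (oLimit r x \<and> le x (gam q))"
  then show "idx q x = undefined \<and> (\<forall>i. cl q x i = {})"
    using outside assms(2) by simp
qed

lemma leP_agree:
  assumes p: "inP r k p" and q: "inP r k q" and qp: "leP r k q p" and x: "le x (gam p)"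
  shows "idx q x = idx p x" and "cl q x = cl p x"
proof -
  have xq: "le x (gam q)"
    using le_trans[OF x] qp unfolding leP_def by blast
  have "idx q x = idx p x \<and> cl q x = cl p x"
  proof (cases "oLimit r x")
    case True
    have idx: "idx q x = idx p x"
      using qp True x unfolding leP_def by blast
    have "cl q x i = cl p x i" for i
    proof (cases "le (idx p x) i \<and> lt i k")
      case True
      then show ?thesis
        using qp \<open>oLimit r x\<close> x unfolding leP_def by blast
    next
      case False
      then show ?thesis
        using inP_cl_empty[OF p \<open>oLimit r x\<close> x] inP_cl_empty[OF q \<open>oLimit r x\<close> xq] idx by simp
    qed
    with idx show ?thesis
      by blast
  next
    case False
    then show ?thesis
      using inP_idx_outside[OF p] inP_idx_outside[OF q] inP_cl_outside[OF p] inP_cl_outside[OF q]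
      by auto
  qed
  then show "idx q x = idx p x" "cl q x = cl p x"
    by auto
qed

lemma leP_if_agree:
  assumes "le (gam p) (gam q)" and "\<And>x. le x (gam p) \<Longrightarrow> idx q x = idx p x \<and> cl q x = cl p x"
  shows "leP r k q p"
  unfolding leP_def using assms by simp

lemma leP_trans:
  assumes "inP r k p1" "inP r k p2" "inP r k p3" "leP r k p3 p2" "leP r k p2 p1"
  shows "leP r k p3 p1"
proof (rule leP_if_agree)
  show "le (gam p1) (gam p3)"
    using assms(4,5) le_trans unfolding leP_def by blast
next
  fix x
  assume x: "le x (gam p1)"
  then have "le x (gam p2)"
    using le_trans assms(5) unfolding leP_def by blast
  then show "idx p3 x = idx p1 x \<and> cl p3 x = cl p1 x"
    using leP_agree[OF assms(1,2,5) x] leP_agree[OF assms(2,3,4)] by simp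
qed

definition top_closure :: "'a cond \<Rightarrow> 'a \<Rightarrow> 'a set" where
  "top_closure p i = (if oLimit r (gam p) then insert (gam p) (cl p (gam p) i) else {})"

lemma top_closure_le: "inP r k p \<Longrightarrow> c \<in> top_closure p i \<Longrightarrow> le c (gam p)"
  unfolding top_closure_def using inP_cl_lt[of k p c "gam p" i] lt_imp_le by (auto split: if_splits)

lemma top_closure_Int_below:
  assumes "inP r k p"
  shows "top_closure p i \<inter> {d. lt d (gam p)} = cl p (gam p) i"
proof (cases "oLimit r (gam p)")
  case True
  then show ?thesis
    unfolding top_closure_def using inP_cl_lt[OF assms] by auto
next
  case False
  then show ?thesis
    unfolding top_closure_def using inP_cl_outside[OF assms] by simp
qed

lemma top_closure_closed:
  assumes p: "inP r k p" and i: "oLimit r (gam p) \<Longrightarrow> le (idx p (gam p)) i" "lt i k"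
    and b: "\<not> ozero r b" "supEq r (top_closure p i) b"
  shows "b \<in> top_closure p i"
proof (cases "oLimit r (gam p)")
  case True
  then show ?thesis
    using clubIn_insert_closed[OF inP_clubIn[OF p True le_refl i(1)[OF True] i(2)] b(1)] b(2)
    unfolding top_closure_def by simp
next
  case False
  then show ?thesis
    using b not_supEq_empty unfolding top_closure_def by simp
qed

lemma top_closure_mono:
  "inP r k p \<Longrightarrow> (oLimit r (gam p) \<Longrightarrow> le (idx p (gam p)) i) \<Longrightarrow> le i j \<Longrightarrow> lt j k \<Longrightarrow>
    top_closure p i \<subseteq> top_closure p j"
  unfolding top_closure_def using inP_cl_mono[of k p "gam p" i j] by auto

lemma inP_top_cl_closed:
  assumes p: "inP r k p" and i: "oLimit r (gam p) \<Longrightarrow> le (idx p (gam p)) i" "lt i k"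
    and b: "lt b (gam p)" "\<not> ozero r b" "supEq r (cl p (gam p) i) b"
  shows "b \<in> cl p (gam p) i"
proof (cases "oLimit r (gam p)")
  case True
  then show ?thesis
    using clubIn_closed[OF inP_clubIn[OF p True le_refl i(1)[OF True] i(2)] b] by blast
next
  case False
  then show ?thesis
    using b(2,3) not_supEq_empty inP_cl_outside[OF p] by metis
qed

lemma inP_coherent_extension:
  assumes p: "inP r k p" and g: "oLimit r g" "le g (gam p)" and i: "le (idx p g) i" "lt i k"
    and S: "S \<inter> {d. lt d g} = cl p g i"
    and a: "oLimit r a" "le a g" "a \<in> derivedSet r S"
  shows "le (idx p a) i \<and> S \<inter> {d. lt d a} = cl p a i"
proof (cases "a = g")
  case False
  then have "lt a g"
    using a(2) le_neq_lt by blast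
  have "a \<in> derivedSet r (cl p g i)"
    using derivedSet_Int_below[OF \<open>lt a g\<close> S[symmetric]] a(3) by simp
  then have "le (idx p a) i \<and> cl p g i \<inter> {d. lt d a} = cl p a i"
    using inP_coherent[OF p a(1) g(1) \<open>lt a g\<close> g(2) i] by blast
  moreover have "S \<inter> {d. lt d a} = cl p g i \<inter> {d. lt d a}"
    using S \<open>lt a g\<close> lt_trans by blast
  ultimately show ?thesis
    by simp
qed (use i S in simp)

end

section \<open>Consequences of regularity\<close>

text \<open>Only the infinity of \<open>\<kappa>\<close> (the order type below \<open>k\<close>) is needed.\<close>

locale regular_universe = ordinal_universe +
  fixes k :: 'a
  assumes card_order: "card_order r"
    and regular: "regularCard r"
    and kappa_infinite: "infinite (underS r k)"
begin

lemma Card_order_r: "Card_order r"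
  using card_order card_order_on_Card_order by blast

lemma underS_ordLess: "|underS r a| <o r"
  using card_of_underS[OF Card_order_r] Field_r by blast

lemma bounded_if_ordLess:
  assumes "|S| <o r"
  shows "\<exists>b. \<forall>s\<in>S. le s b"
proof -
  have "\<not> cofinal S r"
  proof
    assume "cofinal S r"
    then have "|S| =o r"
      using regular Field_r unfolding regularCard_def by blast
    then show False
      using assms not_ordLess_ordIso by blast
  qed
  then obtain a where a: "\<forall>s\<in>S. \<not> (a \<noteq> s \<and> le a s)"
    unfolding cofinal_def Field_r by blast
  have "le s a" if "s \<in> S" for s
    using a that not_le[of a s] lt_imp_le by (cases "s = a") auto
  then show ?thesis
    by blast
qed

lemma ex_gt: "\<exists>y. lt x y"
proof -
  have "infinite (Field r)"
    using kappa_infinite finite_subset[of "underS r k" "Field r"] Field_r by blast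
  then show ?thesis
    using infinite_Card_order_limit[OF Card_order_r] Field_r unfolding olt_def by blast
qed

lemma oSucc_least_gt: "oSucc r x (least (lt x))"
proof -
  obtain y where "lt x y"
    using ex_gt by blast
  then have "lt x (least (lt x))"
    by (rule least_in)
  moreover have "\<not> lt c (least (lt x))" if "lt x c" for c
    using least_le[of "lt x" c] that not_lt by blast
  ultimately show ?thesis
    unfolding oSucc_def by blast
qed

lemma ex_oSucc: "\<exists>s. oSucc r x s"
  using oSucc_least_gt by blast

text \<open>The supremum of the finite iterates of the successor operation above \<open>x\<close> is a limit;
  it exists since countable sets are bounded, as \<open>\<aleph>\<^sub>0 \<le> \<kappa> < \<lambda>\<close> and \<open>\<lambda>\<close> is regular.\<close>
lemma ex_limit_above: "\<exists>L. oLimit r L \<and> lt x L"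
proof -
  define f where "f n = ((\<lambda>y. least (lt y)) ^^ n) x" for n
  have f_lt: "lt (f n) (f (Suc n))" for n
    using oSucc_lt[OF oSucc_least_gt] unfolding f_def by simp
  have "|range f| \<le>o |UNIV :: nat set|"
    by (rule card_of_image)
  also have "|UNIV :: nat set| \<le>o |underS r k|"
    using kappa_infinite infinite_iff_card_of_nat by blast
  finally have "|range f| <o r"
    using ordLeq_ordLess_trans underS_ordLess by blast
  then obtain b where "\<forall>n. le (f n) b"
    using bounded_if_ordLess by blast
  define L where "L = least (\<lambda>u. \<forall>n. le (f n) u)"
  have ub: "le (f n) L" for n
    using least_in[of "\<lambda>u. \<forall>n. le (f n) u", OF \<open>\<forall>n. le (f n) b\<close>] unfolding L_def by blast
  have f_lt_L: "lt (f n) L" for n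
    using f_lt ub lt_le_trans by blast
  have "oLimit r L"
    unfolding oLimit_def
  proof (intro conjI allI impI)
    show "\<not> ozero r L"
      using lt_not_zero[OF f_lt_L] .
  next
    fix c
    assume "lt c L"
    then have "\<not> (\<forall>n. le (f n) c)"
      using least_le[of "\<lambda>u. \<forall>n. le (f n) u" c] not_le unfolding L_def by blast
    then show "\<exists>d. lt c d \<and> lt d L"
      using f_lt_L not_le by blast
  qed
  moreover have "lt x L"
    using f_lt_L[of 0] unfolding f_def by simp
  ultimately show ?thesis
    by blast
qed

lemma ord0_lt_k: "lt ord0 k"
proof -
  obtain w where "w \<in> underS r k"
    using kappa_infinite by (metis finite.emptyI equals0I)
  then have "lt w k"
    unfolding underS_def olt_def by simp
  then show ?thesis
    using le_lt_trans[OF ord0_le] by blast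
qed

lemma ex_oEven_between:
  assumes a: "oLimit r a" and d: "lt d a"
  shows "\<exists>e. oEven r e \<and> \<not> ozero r e \<and> lt d e \<and> lt e a"
proof -
  obtain s1 s2 where s1: "oSucc r d s1" and s2: "oSucc r s1 s2"
    using ex_oSucc by blast
  have s1_lt: "lt d s1" "lt s1 a"
    using oSucc_lt[OF s1] oSucc_lt_limit[OF a d s1] by simp_all
  have s2_lt: "lt d s2" "lt s2 a"
    using lt_trans[OF s1_lt(1) oSucc_lt[OF s2]] oSucc_lt_limit[OF a s1_lt(2) s2] by simp_all
  from oEven_or_succ_oEven[of d] show ?thesis
  proof
    assume "oEven r d"
    then have "oEven r s2"
      using s1 s2 by (rule oEven.step)
    then show ?thesis
      using s2_lt lt_not_zero by blast
  next
    assume "\<exists>e. oEven r e \<and> oSucc r e d"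
    then obtain e where "oEven r e" "oSucc r e d"
      by blast
    then have "oEven r s1"
      using s1 by (rule oEven.step)
    then show ?thesis
      using s1_lt lt_not_zero by blast
  qed
qed

definition next_limit :: "'a \<Rightarrow> 'a" where
  "next_limit x = least (\<lambda>L. oLimit r L \<and> lt x L)"

lemma next_limit: "oLimit r (next_limit x)" "lt x (next_limit x)"
  using least_in[of "\<lambda>L. oLimit r L \<and> lt x L"] ex_limit_above unfolding next_limit_def by blast+

lemma le_of_limit_lt_next_limit: "oLimit r a \<Longrightarrow> lt a (next_limit x) \<Longrightarrow> le a x"
  using least_le[of "\<lambda>L. oLimit r L \<and> lt x L" a] not_le not_lt unfolding next_limit_def by blast

definition upto_next_limit :: "'a \<Rightarrow> 'a set" where
  "upto_next_limit g = {x. le g x \<and> lt x (next_limit g)}"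

lemma in_upto_next_limit: "g \<in> upto_next_limit g"
  unfolding upto_next_limit_def using next_limit(2) by simp

lemma Un_upto_next_limit_Int_below:
  "le a g \<Longrightarrow> (D \<union> upto_next_limit g) \<inter> {d. lt d a} = D \<inter> {d. lt d a}"
  unfolding upto_next_limit_def using le_trans not_le by blast

lemma supEq_Un_upto_next_limit:
  assumes "supEq r (D \<union> upto_next_limit g) b" "lt b g"
  shows "supEq r D b"
proof -
  have "supEq r ((D \<union> upto_next_limit g) \<inter> {d. lt d g}) b"
    using assms supEq_Int_below[OF lt_imp_le[OF assms(2)]] by blast
  then have "supEq r (D \<inter> {d. lt d g}) b"
    by (simp add: Un_upto_next_limit_Int_below)
  then show ?thesis
    using supEq_Int_below[OF lt_imp_le[OF assms(2)]] by blast
qed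

lemma clubIn_Un_upto_next_limit:
  assumes bounded: "\<And>c. c \<in> D \<Longrightarrow> le c g"
    and closed: "\<And>b. lt b g \<Longrightarrow> \<not> ozero r b \<Longrightarrow> supEq r D b \<Longrightarrow> b \<in> D"
  shows "clubIn r (D \<union> upto_next_limit g) (next_limit g)"
proof (rule clubInI)
  fix c
  assume "c \<in> D \<union> upto_next_limit g"
  then show "lt c (next_limit g)"
    using bounded le_lt_trans[OF _ next_limit(2)] unfolding upto_next_limit_def by blast
next
  fix b
  assume b: "lt b (next_limit g)"
  show "\<exists>c\<in>D \<union> upto_next_limit g. lt b c"
  proof (cases "lt b g")
    case True
    then show ?thesis
      using in_upto_next_limit by blast
  next
    case False
    obtain s where s: "oSucc r b s"
      using ex_oSucc by blast
    have "s \<in> upto_next_limit g"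
      using False oSucc_lt_limit[OF next_limit(1) b s] le_trans[OF _ lt_imp_le[OF oSucc_lt[OF s]]]
      unfolding upto_next_limit_def not_lt by blast
    then show ?thesis
      using oSucc_lt[OF s] by blast
  qed
next
  fix b
  assume b: "lt b (next_limit g)" "\<not> ozero r b" "supEq r (D \<union> upto_next_limit g) b"
  show "b \<in> D \<union> upto_next_limit g"
  proof (cases "lt b g")
    case True
    then show ?thesis
      using closed[OF True b(2) supEq_Un_upto_next_limit[OF b(3) True]] by blast
  next
    case False
    then show ?thesis
      using b(1) not_lt unfolding upto_next_limit_def by blast
  qed
qed

section \<open>Player II's move at successor stages\<close>

lemma supEq_top_closure_Un_le:
  assumes p: "inP r k p" and a: "le a g" and sup: "supEq r (top_closure p i \<union> upto_next_limit g) a"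
  shows "le a (gam p)"
proof -
  have "supEq r (top_closure p i \<inter> {d. lt d a}) a"
    using sup supEq_Int_below[OF le_refl] Un_upto_next_limit_Int_below[OF a] by metis
  then have "supEq r (top_closure p i) a"
    using supEq_Int_below[OF le_refl] by blast
  then have "\<not> lt (gam p) a"
    using supEq_not_bounded top_closure_le[OF p] by blast
  then show ?thesis
    using not_lt by blast
qed

definition switch_index :: "'a cond \<Rightarrow> 'a cond \<Rightarrow> 'a" where
  "switch_index pc pb = (SOME j. le (idx pb (gam pb)) j \<and> lt j k \<and>
      (oLimit r (gam pc) \<longrightarrow> gam pc = gam pb \<or> gam pc \<in> derivedSet r (cl pb (gam pb) j)))"

text \<open>From the index \<open>switch_index pc pb\<close> on, the new top clubs continue those at the top of
  \<open>pb\<close>; below it they continue those at the top of \<open>pc\<close> with \<open>gam pc\<close> added, so that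
  \<open>gam pc\<close> becomes a limit point of the new club with index \<open>ord0\<close>.\<close>
definition succ_top_cl :: "'a cond \<Rightarrow> 'a cond \<Rightarrow> 'a \<Rightarrow> 'a set" where
  "succ_top_cl pc pb i =
     (if \<not> lt i k then {}
      else if le (switch_index pc pb) i then cl pb (gam pb) i \<union> upto_next_limit (gam pb)
      else top_closure pc i \<union> upto_next_limit (gam pb))"

definition succ_move :: "'a cond \<Rightarrow> 'a cond \<Rightarrow> 'a cond" where
  "succ_move pc pb =
     (next_limit (gam pb),
      \<lambda>x. if x = next_limit (gam pb) then ord0 else idx pb x,
      \<lambda>x i. if x = next_limit (gam pb) then succ_top_cl pc pb i else cl pb x i)"

lemma succ_move_simps:
  "gam (succ_move pc pb) = next_limit (gam pb)"
  "idx (succ_move pc pb) x = (if x = next_limit (gam pb) then ord0 else idx pb x)"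
  "cl (succ_move pc pb) x = (if x = next_limit (gam pb) then succ_top_cl pc pb else cl pb x)"
  unfolding succ_move_def gam_def idx_def cl_def by auto

context
  fixes pc pb :: "'a cond"
  assumes pc: "inP r k pc" and pb: "inP r k pb" and pb_le_pc: "leP r k pb pc"
    and pc_top_idx: "oLimit r (gam pc) \<Longrightarrow> idx pc (gam pc) = ord0"
begin

lemma gam_pc_le_gam_pb: "le (gam pc) (gam pb)"
  using pb_le_pc unfolding leP_def by simp

lemma pb_agrees_pc: "le x (gam pc) \<Longrightarrow> idx pb x = idx pc x \<and> cl pb x = cl pc x"
  using leP_agree[OF pc pb pb_le_pc] by simp

lemma oLimit_gam_pb: "oLimit r (gam pc) \<Longrightarrow> oLimit r (gam pb)"
  using limit_le_limit_or_zero[OF _ gam_pc_le_gam_pb inP_gam[OF pb]] .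

lemma switch_index:
  assumes "oLimit r (gam pb)"
  shows "le (idx pb (gam pb)) (switch_index pc pb)" "lt (switch_index pc pb) k"
    and "oLimit r (gam pc) \<Longrightarrow>
      gam pc = gam pb \<or> gam pc \<in> derivedSet r (cl pb (gam pb) (switch_index pc pb))"
proof -
  have "\<exists>j. le (idx pb (gam pb)) j \<and> lt j k \<and>
      (oLimit r (gam pc) \<longrightarrow> gam pc = gam pb \<or> gam pc \<in> derivedSet r (cl pb (gam pb) j))"
  proof (cases "oLimit r (gam pc) \<and> gam pc \<noteq> gam pb")
    case True
    then have "lt (gam pc) (gam pb)"
      using gam_pc_le_gam_pb le_neq_lt by blast
    then show ?thesis
      using inP_covered[OF pb _ assms _ le_refl] True by blast
  next
    case False
    then show ?thesis
      using inP_idx_lt[OF pb assms le_refl] by (intro exI[of _ "idx pb (gam pb)"]) auto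
  qed
  then have "le (idx pb (gam pb)) (switch_index pc pb) \<and> lt (switch_index pc pb) k \<and>
      (oLimit r (gam pc) \<longrightarrow>
        gam pc = gam pb \<or> gam pc \<in> derivedSet r (cl pb (gam pb) (switch_index pc pb)))"
    unfolding switch_index_def by (rule someI_ex)
  then show "le (idx pb (gam pb)) (switch_index pc pb)" "lt (switch_index pc pb) k"
    and "oLimit r (gam pc) \<Longrightarrow>
      gam pc = gam pb \<or> gam pc \<in> derivedSet r (cl pb (gam pb) (switch_index pc pb))"
    by blast+
qed

lemma idx_pb_top_le: "oLimit r (gam pb) \<Longrightarrow> le (switch_index pc pb) i \<Longrightarrow> le (idx pb (gam pb)) i"
  using switch_index(1) le_trans by blast

lemma succ_top_cl_clubIn:
  assumes i: "lt i k"
  shows "clubIn r (succ_top_cl pc pb i) (next_limit (gam pb))"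
proof (cases "le (switch_index pc pb) i")
  case True
  have "clubIn r (cl pb (gam pb) i \<union> upto_next_limit (gam pb)) (next_limit (gam pb))"
  proof (rule clubIn_Un_upto_next_limit)
    fix c
    assume "c \<in> cl pb (gam pb) i"
    then show "le c (gam pb)"
      using inP_cl_lt[OF pb] lt_imp_le by blast
  next
    fix b
    assume "lt b (gam pb)" "\<not> ozero r b" "supEq r (cl pb (gam pb) i) b"
    then show "b \<in> cl pb (gam pb) i"
      using inP_top_cl_closed[OF pb idx_pb_top_le[OF _ True] i] by blast
  qed
  with True i show ?thesis
    unfolding succ_top_cl_def by simp
next
  case False
  have "clubIn r (top_closure pc i \<union> upto_next_limit (gam pb)) (next_limit (gam pb))"
  proof (rule clubIn_Un_upto_next_limit)
    fix c
    assume "c \<in> top_closure pc i"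
    then show "le c (gam pb)"
      using top_closure_le[OF pc] gam_pc_le_gam_pb le_trans by blast
  next
    fix b
    assume "lt b (gam pb)" "\<not> ozero r b" "supEq r (top_closure pc i) b"
    then show "b \<in> top_closure pc i"
      using top_closure_closed[OF pc _ i] pc_top_idx by simp
  qed
  with False i show ?thesis
    unfolding succ_top_cl_def by simp
qed

lemma succ_top_cl_coherent:
  assumes a: "oLimit r a" "lt a (next_limit (gam pb))" and i: "lt i k"
    and der: "a \<in> derivedSet r (succ_top_cl pc pb i)"
  shows "le (idx pb a) i \<and> succ_top_cl pc pb i \<inter> {d. lt d a} = cl pb a i"
proof -
  have a_le: "le a (gam pb)"
    using le_of_limit_lt_next_limit a .
  have gb_lim: "oLimit r (gam pb)"
    using limit_le_limit_or_zero[OF a(1) a_le inP_gam[OF pb]] .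
  show ?thesis
  proof (cases "le (switch_index pc pb) i")
    case True
    let ?S = "cl pb (gam pb) i \<union> upto_next_limit (gam pb)"
    have S: "succ_top_cl pc pb i = ?S"
      using True i unfolding succ_top_cl_def by simp
    have "?S \<inter> {d. lt d (gam pb)} = cl pb (gam pb) i \<inter> {d. lt d (gam pb)}"
      by (rule Un_upto_next_limit_Int_below[OF le_refl])
    also have "\<dots> = cl pb (gam pb) i"
      using inP_cl_lt[OF pb] by auto
    finally have "?S \<inter> {d. lt d (gam pb)} = cl pb (gam pb) i" .
    then show ?thesis
      using inP_coherent_extension[OF pb gb_lim le_refl idx_pb_top_le[OF gb_lim True] i _ a(1) a_le]
        der S by simp
  next
    case False
    let ?S = "top_closure pc i \<union> upto_next_limit (gam pb)"
    have S: "succ_top_cl pc pb i = ?S"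
      using False i unfolding succ_top_cl_def by simp
    have "supEq r ?S a"
      using der S unfolding derivedSet_def by simp
    then have a_le_gc: "le a (gam pc)"
      by (rule supEq_top_closure_Un_le[OF pc a_le])
    have gc_lim: "oLimit r (gam pc)"
      using limit_le_limit_or_zero[OF a(1) a_le_gc inP_gam[OF pc]] .
    have "?S \<inter> {d. lt d (gam pc)} = cl pc (gam pc) i"
      using Un_upto_next_limit_Int_below[OF gam_pc_le_gam_pb] top_closure_Int_below[OF pc] by simp
    then have "le (idx pc a) i \<and> ?S \<inter> {d. lt d a} = cl pc a i"
      using inP_coherent_extension[OF pc gc_lim le_refl _ i _ a(1) a_le_gc] pc_top_idx[OF gc_lim]
        der S by simp
    then show ?thesis
      using pb_agrees_pc[OF a_le_gc] S by simp
  qed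
qed

lemma succ_top_cl_covers:
  assumes a: "oLimit r a" "lt a (next_limit (gam pb))"
  shows "\<exists>i. lt i k \<and> a \<in> derivedSet r (succ_top_cl pc pb i)"
proof -
  let ?j = "switch_index pc pb"
  have a_le: "le a (gam pb)"
    using le_of_limit_lt_next_limit a .
  have gb_lim: "oLimit r (gam pb)"
    using limit_le_limit_or_zero[OF a(1) a_le inP_gam[OF pb]] .
  have j: "le (idx pb (gam pb)) ?j" "lt ?j k"
    using switch_index[OF gb_lim] by blast+
  have top: "succ_top_cl pc pb i = cl pb (gam pb) i \<union> upto_next_limit (gam pb)"
    if "le ?j i" "lt i k" for i
    using that unfolding succ_top_cl_def by simp
  show ?thesis
  proof (cases "a = gam pb")
    case True
    have "gam pb \<in> derivedSet r (cl pb (gam pb) ?j \<union> upto_next_limit (gam pb))"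
      by (rule limit_in_derivedSet[OF inP_clubIn[OF pb gb_lim le_refl j]])
        (use in_upto_next_limit in blast)+
    then show ?thesis
      using True j(2) top[OF le_refl j(2)] by auto
  next
    case False
    then have "lt a (gam pb)"
      using a_le le_neq_lt by blast
    then obtain i0
      where i0: "le (idx pb (gam pb)) i0" "lt i0 k" "a \<in> derivedSet r (cl pb (gam pb) i0)"
      using inP_covered[OF pb a(1) gb_lim _ le_refl] by blast
    obtain i where i: "lt i k" "le ?j i" "cl pb (gam pb) i0 \<subseteq> cl pb (gam pb) i"
    proof (cases "le ?j i0")
      case True
      then show ?thesis
        using that i0(2) by blast
    next
      case False
      then have "le i0 ?j"
        using not_le lt_imp_le by blast
      then show ?thesis
        using that[OF j(2) le_refl] inP_cl_mono[OF pb gb_lim le_refl i0(1) _ j(2)] by blast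
    qed
    have "a \<in> derivedSet r (succ_top_cl pc pb i)"
      using derivedSet_mono[OF i0(3)] i(3) top[OF i(2,1)] by blast
    then show ?thesis
      using i(1) by blast
  qed
qed

lemma top_closure_pc_subset:
  assumes i: "\<not> le (switch_index pc pb) i" and i': "le (switch_index pc pb) i'" "lt i' k"
  shows "top_closure pc i \<subseteq> cl pb (gam pb) i' \<union> upto_next_limit (gam pb)"
proof (cases "oLimit r (gam pc)")
  case False
  then show ?thesis
    unfolding top_closure_def by simp
next
  case gc_lim: True
  let ?j = "switch_index pc pb"
  have gb_lim: "oLimit r (gam pb)"
    using oLimit_gam_pb[OF gc_lim] .
  have j: "le (idx pb (gam pb)) ?j" "lt ?j k"
    using switch_index[OF gb_lim] by blast+
  have "le i ?j"
    using i not_le[of ?j i] lt_imp_le by simp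
  have j_i': "cl pb (gam pb) ?j \<subseteq> cl pb (gam pb) i'"
    using inP_cl_mono[OF pb gb_lim le_refl j(1) i'] .
  have pc_pb: "cl pc (gam pc) = cl pb (gam pc)" "idx pb (gam pc) = ord0"
    using pb_agrees_pc[OF le_refl] pc_top_idx[OF gc_lim] by simp_all
  have "cl pb (gam pc) i \<subseteq> cl pb (gam pc) ?j"
    using inP_cl_mono[OF pb gc_lim gam_pc_le_gam_pb _ \<open>le i ?j\<close> j(2)] pc_pb(2) by simp
  from switch_index(3)[OF gb_lim gc_lim] show ?thesis
  proof
    assume eq: "gam pc = gam pb"
    have "gam pc \<in> upto_next_limit (gam pb)"
      using eq in_upto_next_limit by simp
    with \<open>cl pb (gam pc) i \<subseteq> cl pb (gam pc) ?j\<close> j_i' show ?thesis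
      using eq pc_pb(1) gc_lim unfolding top_closure_def by auto
  next
    assume der: "gam pc \<in> derivedSet r (cl pb (gam pb) ?j)"
    then have gc_in: "gam pc \<in> cl pb (gam pb) ?j"
      unfolding derivedSet_def by simp
    then have "lt (gam pc) (gam pb)"
      using inP_cl_lt[OF pb] by blast
    then have "cl pb (gam pc) ?j = cl pb (gam pb) ?j \<inter> {d. lt d (gam pc)}"
      using inP_coherent[OF pb gc_lim gb_lim _ le_refl j der] by simp
    then have "cl pc (gam pc) i \<subseteq> cl pb (gam pb) ?j"
      using \<open>cl pb (gam pc) i \<subseteq> cl pb (gam pc) ?j\<close> unfolding pc_pb(1) by blast
    with gc_in j_i' show ?thesis
      using gc_lim unfolding top_closure_def by auto
  qed
qed

lemma succ_top_cl_mono: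
  assumes ii': "lt i i'" and i': "lt i' k"
  shows "succ_top_cl pc pb i \<subseteq> succ_top_cl pc pb i'"
proof -
  let ?j = "switch_index pc pb"
  have i: "lt i k" "le i i'"
    using lt_trans[OF ii' i'] lt_imp_le[OF ii'] by simp_all
  consider "le ?j i" | "\<not> le ?j i" "le ?j i'" | "\<not> le ?j i'"
    by blast
  then show ?thesis
  proof cases
    case 1
    then have "le ?j i'"
      using le_trans i(2) by blast
    have "cl pb (gam pb) i \<subseteq> cl pb (gam pb) i'"
    proof (cases "oLimit r (gam pb)")
      case True
      then show ?thesis
        using inP_cl_mono[OF pb True le_refl idx_pb_top_le[OF True 1] i(2) i'] by blast
    next
      case False
      then show ?thesis
        using inP_cl_outside[OF pb] by simp
    qed
    with 1 \<open>le ?j i'\<close> i(1) i' show ?thesis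
      unfolding succ_top_cl_def by auto
  next
    case 2
    then show ?thesis
      using top_closure_pc_subset[OF 2 i'] i(1) i' unfolding succ_top_cl_def by auto
  next
    case 3
    then have "\<not> le ?j i"
      using le_trans i(2) by blast
    have "top_closure pc i \<subseteq> top_closure pc i'"
      using top_closure_mono[OF pc _ i(2) i'] pc_top_idx by simp
    with 3 \<open>\<not> le ?j i\<close> i(1) i' show ?thesis
      unfolding succ_top_cl_def by auto
  qed
qed

lemma succ_top_cl_threads_pc:
  assumes gc_lim: "oLimit r (gam pc)"
  shows "gam pc \<in> derivedSet r (succ_top_cl pc pb ord0)"
    and "succ_top_cl pc pb ord0 \<inter> {d. lt d (gam pc)} = cl pc (gam pc) ord0"
proof -
  let ?j = "switch_index pc pb"
  have gb_lim: "oLimit r (gam pb)"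
    using oLimit_gam_pb[OF gc_lim] .
  show der: "gam pc \<in> derivedSet r (succ_top_cl pc pb ord0)"
  proof (cases "le ?j ord0")
    case True
    have top: "succ_top_cl pc pb ord0 = cl pb (gam pb) ord0 \<union> upto_next_limit (gam pb)"
      using True ord0_lt_k unfolding succ_top_cl_def by simp
    have club: "clubIn r (cl pb (gam pb) ord0) (gam pb)"
      using inP_clubIn[OF pb gb_lim le_refl idx_pb_top_le[OF gb_lim True] ord0_lt_k] .
    from switch_index(3)[OF gb_lim gc_lim] show ?thesis
    proof
      assume "gam pc = gam pb"
      then show ?thesis
        using limit_in_derivedSet[OF club, of "succ_top_cl pc pb ord0"] in_upto_next_limit top
        by auto
    next
      assume "gam pc \<in> derivedSet r (cl pb (gam pb) ?j)"
      moreover have "cl pb (gam pb) ?j \<subseteq> cl pb (gam pb) ord0"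
        using inP_cl_mono[OF pb gb_lim le_refl switch_index(1)[OF gb_lim] True ord0_lt_k] .
      ultimately show ?thesis
        using derivedSet_mono top by blast
    qed
  next
    case False
    have top: "succ_top_cl pc pb ord0 = top_closure pc ord0 \<union> upto_next_limit (gam pb)"
      using False ord0_lt_k unfolding succ_top_cl_def by simp
    have club: "clubIn r (cl pc (gam pc) ord0) (gam pc)"
      using inP_clubIn[OF pc gc_lim le_refl _ ord0_lt_k] pc_top_idx[OF gc_lim] by simp
    show ?thesis
      using limit_in_derivedSet[OF club, of "succ_top_cl pc pb ord0"] gc_lim top
      unfolding top_closure_def by auto
  qed
  have "lt (gam pc) (next_limit (gam pb))"
    using le_lt_trans[OF gam_pc_le_gam_pb next_limit(2)] .
  then show "succ_top_cl pc pb ord0 \<inter> {d. lt d (gam pc)} = cl pc (gam pc) ord0"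
    using succ_top_cl_coherent[OF gc_lim _ ord0_lt_k der] pb_agrees_pc[OF le_refl] by simp
qed

lemma succ_move_inP_at: "inP_at k (succ_move pc pb) (next_limit (gam pb))"
proof (rule inP_atI)
  let ?q = "succ_move pc pb" and ?G = "next_limit (gam pb)"
  fix a i
  assume "oLimit r a" "lt a ?G" "le (idx ?q ?G) i" "lt i k" "a \<in> derivedSet r (cl ?q ?G i)"
  then show "le (idx ?q a) i \<and> cl ?q ?G i \<inter> {d. lt d a} = cl ?q a i"
    using succ_top_cl_coherent by (auto simp: succ_move_simps)
next
  let ?q = "succ_move pc pb" and ?G = "next_limit (gam pb)"
  fix a
  assume "oLimit r a" "lt a ?G"
  then show "\<exists>i. le (idx ?q ?G) i \<and> lt i k \<and> a \<in> derivedSet r (cl ?q ?G i)"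
    using succ_top_cl_covers by (simp add: succ_move_simps)
qed (use succ_top_cl_clubIn succ_top_cl_mono ord0_lt_k in
      \<open>simp_all add: succ_move_simps succ_top_cl_def\<close>)

lemma succ_move_inP: "inP r k (succ_move pc pb)"
proof (rule inP_extend_top)
  let ?q = "succ_move pc pb" and ?G = "next_limit (gam pb)"
  have below_G: "idx ?q y = idx pb y \<and> cl ?q y = cl pb y" if "lt y ?G" for y
    using that by (auto simp: succ_move_simps)
  show "oLimit r ?G" "gam ?q = ?G"
    by (simp_all add: next_limit(1) succ_move_simps)
  show "inP_at k ?q ?G"
    by (rule succ_move_inP_at)
  show "\<exists>p. inP r k p \<and> le b (gam p) \<and> (\<forall>y. le y b \<longrightarrow> idx ?q y = idx p y \<and> cl ?q y = cl p y)"
    if "oLimit r b" "lt b ?G" for b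
    using pb le_of_limit_lt_next_limit[OF that] below_G le_lt_trans[OF _ that(2)] by blast
  show "idx ?q x = undefined \<and> (\<forall>i. cl ?q x i = {})"
    if x: "\<not> (oLimit r x \<and> le x ?G)" for x
  proof -
    have "x \<noteq> ?G"
      using x next_limit(1) by auto
    moreover have "\<not> (oLimit r x \<and> le x (gam pb))"
      using x le_trans lt_imp_le[OF next_limit(2)] by blast
    ultimately show ?thesis
      using inP_idx_outside[OF pb] inP_cl_outside[OF pb] by (simp add: succ_move_simps)
  qed
qed

lemma succ_move_leP: "leP r k (succ_move pc pb) pb"
proof (rule leP_if_agree)
  show "le (gam pb) (gam (succ_move pc pb))"
    using lt_imp_le[OF next_limit(2)] by (simp add: succ_move_simps)
  fix x
  assume "le x (gam pb)"
  then have "lt x (next_limit (gam pb))"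
    using le_lt_trans[OF _ next_limit(2)] by blast
  then have "x \<noteq> next_limit (gam pb)"
    by auto
  then show "idx (succ_move pc pb) x = idx pb x \<and> cl (succ_move pc pb) x = cl pb x"
    by (simp add: succ_move_simps)
qed

end

section \<open>Player II's move at limit stages\<close>

definition even_stages :: "'a \<Rightarrow> 'a set" where
  "even_stages a = {e. oEven r e \<and> \<not> ozero r e \<and> lt e a}"

lemma ex_even_stage_above: "oLimit r a \<Longrightarrow> lt d a \<Longrightarrow> \<exists>e\<in>even_stages a. lt d e"
  using ex_oEven_between unfolding even_stages_def by blast

lemma even_stage_lt: "e \<in> even_stages a \<Longrightarrow> lt e a"
  unfolding even_stages_def by simp

definition limit_gam :: "('a \<Rightarrow> 'a cond) \<Rightarrow> 'a \<Rightarrow> 'a" where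
  "limit_gam H a = least (\<lambda>u. \<forall>d. lt d a \<longrightarrow> le (gam (H d)) u)"

lemma limit_gam_bounded: "\<exists>b. \<forall>d. lt d a \<longrightarrow> le (gam (H d)) b"
proof -
  have "|gam ` H ` underS r a| \<le>o |underS r a|"
    using ordLeq_transitive[OF card_of_image card_of_image] .
  then have "|gam ` H ` underS r a| <o r"
    using ordLeq_ordLess_trans underS_ordLess by blast
  then obtain b where "\<forall>s\<in>gam ` H ` underS r a. le s b"
    using bounded_if_ordLess by blast
  moreover have "d \<in> underS r a" if "lt d a" for d
    using that unfolding underS_def olt_def by simp
  ultimately show ?thesis
    by blast
qed

lemma limit_gam_ub: "lt d a \<Longrightarrow> le (gam (H d)) (limit_gam H a)"
  using least_in[of "\<lambda>u. \<forall>d. lt d a \<longrightarrow> le (gam (H d)) u"] limit_gam_bounded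
  unfolding limit_gam_def by blast

lemma limit_gam_least: "(\<And>d. lt d a \<Longrightarrow> le (gam (H d)) v) \<Longrightarrow> le (limit_gam H a) v"
  using least_le[of "\<lambda>u. \<forall>d. lt d a \<longrightarrow> le (gam (H d)) u" v] unfolding limit_gam_def by blast

definition witness_stage :: "('a \<Rightarrow> 'a cond) \<Rightarrow> 'a \<Rightarrow> 'a \<Rightarrow> 'a" where
  "witness_stage H a x = (SOME d. lt d a \<and> lt x (gam (H d)))"

definition limit_top_cl :: "('a \<Rightarrow> 'a cond) \<Rightarrow> 'a \<Rightarrow> 'a \<Rightarrow> 'a set" where
  "limit_top_cl H a i = (if lt i k then \<Union>e\<in>even_stages a. cl (H e) (gam (H e)) i else {})"

lemma limit_top_cl_eq:
  "lt i k \<Longrightarrow> limit_top_cl H a i = (\<Union>e\<in>even_stages a. cl (H e) (gam (H e)) i)"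
  unfolding limit_top_cl_def by simp

definition limit_move :: "('a \<Rightarrow> 'a cond) \<Rightarrow> 'a \<Rightarrow> 'a cond" where
  "limit_move H a =
     (limit_gam H a,
      \<lambda>x. if x = limit_gam H a then ord0
          else if lt x (limit_gam H a) then idx (H (witness_stage H a x)) x else undefined,
      \<lambda>x i. if x = limit_gam H a then limit_top_cl H a i
          else if lt x (limit_gam H a) then cl (H (witness_stage H a x)) x i else {})"

lemma limit_move_simps:
  "gam (limit_move H a) = limit_gam H a"
  "idx (limit_move H a) x = (if x = limit_gam H a then ord0
      else if lt x (limit_gam H a) then idx (H (witness_stage H a x)) x else undefined)"
  "cl (limit_move H a) x = (if x = limit_gam H a then limit_top_cl H a
      else if lt x (limit_gam H a) then cl (H (witness_stage H a x)) x else (\<lambda>_. {}))"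
  unfolding limit_move_def gam_def idx_def cl_def by auto

context
  fixes H :: "'a \<Rightarrow> 'a cond" and a :: 'a
  assumes a_limit: "oLimit r a"
    and H_inP: "\<And>d. lt d a \<Longrightarrow> inP r k (H d)"
    and H_dec: "\<And>d d'. lt d d' \<Longrightarrow> lt d' a \<Longrightarrow> leP r k (H d') (H d)"
    and H_even_limit: "\<And>e. e \<in> even_stages a \<Longrightarrow> oLimit r (gam (H e))"
    and H_even_idx: "\<And>e. e \<in> even_stages a \<Longrightarrow> idx (H e) (gam (H e)) = ord0"
    and H_even_gt: "\<And>e d. e \<in> even_stages a \<Longrightarrow> lt d e \<Longrightarrow> lt (gam (H d)) (gam (H e))"
    and H_even_threads: "\<And>e e'. e \<in> even_stages a \<Longrightarrow> e' \<in> even_stages a \<Longrightarrow> lt e' e \<Longrightarrow>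
          gam (H e') \<in> derivedSet r (cl (H e) (gam (H e)) ord0)"
begin

lemma gam_lt_limit_gam: "lt d a \<Longrightarrow> lt (gam (H d)) (limit_gam H a)"
  using ex_even_stage_above[OF a_limit] H_even_gt limit_gam_ub even_stage_lt lt_le_trans by blast

lemma ex_even_stage_gam_gt:
  assumes "lt x (limit_gam H a)"
  shows "\<exists>e\<in>even_stages a. lt x (gam (H e))"
proof -
  have "\<exists>d. lt d a \<and> lt x (gam (H d))"
    using assms limit_gam_least[of a H x] not_lt not_le by blast
  then obtain d where "lt d a" "lt x (gam (H d))"
    by blast
  then show ?thesis
    using ex_even_stage_above[OF a_limit] H_even_gt lt_trans by blast
qed

lemma limit_gam_limit: "oLimit r (limit_gam H a)"
  unfolding oLimit_def
proof (intro conjI allI impI)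
  have "lt ord0 a"
    using a_limit limit_not_zero ozero_iff_eq_ord0 le_neq_lt[OF ord0_le] by metis
  then show "\<not> ozero r (limit_gam H a)"
    using lt_not_zero[OF gam_lt_limit_gam] by blast
next
  fix b
  assume "lt b (limit_gam H a)"
  then show "\<exists>c. lt b c \<and> lt c (limit_gam H a)"
    using ex_even_stage_gam_gt gam_lt_limit_gam even_stage_lt by blast
qed

lemma stages_agree:
  assumes d: "lt d a" "lt d' a" and x: "le x (gam (H d))" "le x (gam (H d'))"
  shows "idx (H d) x = idx (H d') x \<and> cl (H d) x = cl (H d') x"
proof -
  consider "lt d d'" | "d = d'" | "lt d' d"
    using lt_linear by blast
  then show ?thesis
  proof cases
    case 1
    then show ?thesis
      using leP_agree[OF H_inP[OF d(1)] H_inP[OF d(2)] H_dec[OF 1 d(2)] x(1)] by simp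
  next
    case 3
    then show ?thesis
      using leP_agree[OF H_inP[OF d(2)] H_inP[OF d(1)] H_dec[OF 3 d(1)] x(2)] by simp
  qed simp
qed

lemma limit_move_agree:
  assumes d: "lt d a" and x: "le x (gam (H d))"
  shows "idx (limit_move H a) x = idx (H d) x \<and> cl (limit_move H a) x = cl (H d) x"
proof -
  have x_lt: "lt x (limit_gam H a)"
    using le_lt_trans[OF x gam_lt_limit_gam[OF d]] .
  have "\<exists>d. lt d a \<and> lt x (gam (H d))"
    using ex_even_stage_gam_gt[OF x_lt] even_stage_lt by blast
  then have w: "lt (witness_stage H a x) a \<and> lt x (gam (H (witness_stage H a x)))"
    unfolding witness_stage_def by (rule someI_ex)
  then have "idx (H (witness_stage H a x)) x = idx (H d) x \<and>
      cl (H (witness_stage H a x)) x = cl (H d) x"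
    using stages_agree[OF _ d lt_imp_le x] by blast
  then show ?thesis
    using x_lt by (auto simp: limit_move_simps)
qed

lemma even_top_clubIn:
  "e \<in> even_stages a \<Longrightarrow> lt i k \<Longrightarrow> clubIn r (cl (H e) (gam (H e)) i) (gam (H e))"
  using inP_clubIn[OF H_inP[OF even_stage_lt] H_even_limit le_refl] H_even_idx by simp

lemma even_top_cl_mono:
  "e \<in> even_stages a \<Longrightarrow> le i i' \<Longrightarrow> lt i' k \<Longrightarrow> cl (H e) (gam (H e)) i \<subseteq> cl (H e) (gam (H e)) i'"
  using inP_cl_mono[OF H_inP[OF even_stage_lt] H_even_limit le_refl] H_even_idx by simp

lemma even_top_cl_coherent:
  assumes e: "e \<in> even_stages a" "e' \<in> even_stages a" "lt e' e" and i: "lt i k"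
  shows "cl (H e) (gam (H e)) i \<inter> {d. lt d (gam (H e'))} = cl (H e') (gam (H e')) i"
proof -
  have "gam (H e') \<in> derivedSet r (cl (H e) (gam (H e)) i)"
    using derivedSet_mono[OF H_even_threads[OF e] even_top_cl_mono[OF e(1) ord0_le i]] .
  moreover have lt_gam: "lt (gam (H e')) (gam (H e))"
    using H_even_gt[OF e(1,3)] .
  ultimately have "cl (H e) (gam (H e)) i \<inter> {d. lt d (gam (H e'))} = cl (H e) (gam (H e')) i"
    using inP_coherent[OF H_inP[OF even_stage_lt[OF e(1)]] H_even_limit[OF e(2)]
        H_even_limit[OF e(1)]
        lt_gam le_refl _ i] H_even_idx[OF e(1)] by simp
  also have "\<dots> = cl (H e') (gam (H e')) i"
    using stages_agree[OF even_stage_lt[OF e(1)] even_stage_lt[OF e(2)] lt_imp_le[OF lt_gam]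
        le_refl]
    by simp
  finally show ?thesis .
qed

lemma limit_top_cl_Int_below:
  assumes e: "e \<in> even_stages a" and i: "lt i k"
  shows "limit_top_cl H a i \<inter> {d. lt d (gam (H e))} = cl (H e) (gam (H e)) i"
proof
  show "cl (H e) (gam (H e)) i \<subseteq> limit_top_cl H a i \<inter> {d. lt d (gam (H e))}"
    using e inP_cl_lt[OF H_inP[OF even_stage_lt[OF e]]] unfolding limit_top_cl_eq[OF i] by blast
next
  show "limit_top_cl H a i \<inter> {d. lt d (gam (H e))} \<subseteq> cl (H e) (gam (H e)) i"
  proof
    fix c
    assume c: "c \<in> limit_top_cl H a i \<inter> {d. lt d (gam (H e))}"
    then obtain e' where e': "e' \<in> even_stages a" "c \<in> cl (H e') (gam (H e')) i"
      unfolding limit_top_cl_eq[OF i] by blast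
    consider "lt e' e" | "e' = e" | "lt e e'"
      using lt_linear by blast
    then show "c \<in> cl (H e) (gam (H e)) i"
    proof cases
      case 1
      then show ?thesis
        using even_top_cl_coherent[OF e e'(1) 1 i] e'(2) by blast
    next
      case 3
      then show ?thesis
        using even_top_cl_coherent[OF e'(1) e 3 i] e'(2) c by blast
    qed (use e'(2) in simp)
  qed
qed

lemma gam_in_derivedSet_limit_top_cl:
  assumes e: "e \<in> even_stages a" and i: "lt i k"
  shows "gam (H e) \<in> derivedSet r (limit_top_cl H a i)"
proof -
  obtain e2 where e2: "e2 \<in> even_stages a" "lt e e2"
    using ex_even_stage_above[OF a_limit even_stage_lt[OF e]] by blast
  have "gam (H e) \<in> cl (H e2) (gam (H e2)) i"
    using H_even_threads[OF e2(1) e e2(2)] even_top_cl_mono[OF e2(1) ord0_le i]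
    unfolding derivedSet_def by blast
  then have "gam (H e) \<in> limit_top_cl H a i"
    using e2(1) unfolding limit_top_cl_eq[OF i] by blast
  moreover have "cl (H e) (gam (H e)) i \<subseteq> limit_top_cl H a i"
    using e unfolding limit_top_cl_eq[OF i] by blast
  ultimately show ?thesis
    using limit_in_derivedSet[OF even_top_clubIn[OF e i]] by blast
qed

lemma limit_top_cl_clubIn:
  assumes i: "lt i k"
  shows "clubIn r (limit_top_cl H a i) (limit_gam H a)"
proof (rule clubInI)
  fix c
  assume "c \<in> limit_top_cl H a i"
  then obtain e where e: "e \<in> even_stages a" "c \<in> cl (H e) (gam (H e)) i"
    unfolding limit_top_cl_eq[OF i] by blast
  show "lt c (limit_gam H a)"
    using lt_trans[OF inP_cl_lt[OF H_inP[OF even_stage_lt[OF e(1)]] e(2)]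
        gam_lt_limit_gam[OF even_stage_lt[OF e(1)]]] .
next
  fix b
  assume "lt b (limit_gam H a)"
  then obtain e where "e \<in> even_stages a" "lt b (gam (H e))"
    using ex_even_stage_gam_gt by blast
  then show "\<exists>c\<in>limit_top_cl H a i. lt b c"
    using gam_in_derivedSet_limit_top_cl[OF _ i] unfolding derivedSet_def by blast
next
  fix b
  assume b: "lt b (limit_gam H a)" "\<not> ozero r b" "supEq r (limit_top_cl H a i) b"
  obtain e where e: "e \<in> even_stages a" "lt b (gam (H e))"
    using ex_even_stage_gam_gt[OF b(1)] by blast
  have "supEq r (cl (H e) (gam (H e)) i) b"
    using supEq_Int_below[OF lt_imp_le[OF e(2)]] b(3) limit_top_cl_Int_below[OF e(1) i] by metis
  then have "b \<in> cl (H e) (gam (H e)) i"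
    using clubIn_closed[OF even_top_clubIn[OF e(1) i] e(2) b(2)] by blast
  then show "b \<in> limit_top_cl H a i"
    using e(1) unfolding limit_top_cl_eq[OF i] by blast
qed

lemma limit_top_cl_coherent:
  assumes b: "oLimit r b" "lt b (limit_gam H a)" and i: "lt i k"
    and der: "b \<in> derivedSet r (limit_top_cl H a i)"
  shows "le (idx (limit_move H a) b) i \<and> limit_top_cl H a i \<inter> {d. lt d b} = cl (limit_move H a) b i"
proof -
  obtain e where e: "e \<in> even_stages a" "lt b (gam (H e))"
    using ex_even_stage_gam_gt[OF b(2)] by blast
  let ?C = "cl (H e) (gam (H e)) i"
  have p: "inP r k (H e)"
    using H_inP[OF even_stage_lt[OF e(1)]] .
  have "le (idx (H e) b) i \<and> ?C \<inter> {d. lt d b} = cl (H e) b i"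
  proof (rule inP_coherent[OF p b(1) H_even_limit[OF e(1)] e(2) le_refl _ i])
    show "le (idx (H e) (gam (H e))) i"
      using H_even_idx[OF e(1)] by simp
    show "b \<in> derivedSet r ?C"
      using derivedSet_Int_below[OF e(2) limit_top_cl_Int_below[OF e(1) i, symmetric]] der by simp
  qed
  moreover have "limit_top_cl H a i \<inter> {d. lt d b} = ?C \<inter> {d. lt d b}"
    using limit_top_cl_Int_below[OF e(1) i] e(2) lt_trans by blast
  ultimately show ?thesis
    using limit_move_agree[OF even_stage_lt[OF e(1)] lt_imp_le[OF e(2)]] by simp
qed

lemma limit_top_cl_covers:
  assumes b: "oLimit r b" "lt b (limit_gam H a)"
  shows "\<exists>i. lt i k \<and> b \<in> derivedSet r (limit_top_cl H a i)"
proof -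
  obtain e where e: "e \<in> even_stages a" "lt b (gam (H e))"
    using ex_even_stage_gam_gt[OF b(2)] by blast
  obtain i where i: "lt i k" "b \<in> derivedSet r (cl (H e) (gam (H e)) i)"
    using inP_covered[OF H_inP[OF even_stage_lt[OF e(1)]] b(1) H_even_limit[OF e(1)] e(2) le_refl]
    by blast
  then have "b \<in> derivedSet r (limit_top_cl H a i)"
    using derivedSet_Int_below[OF e(2) limit_top_cl_Int_below[OF e(1) i(1), symmetric]] by simp
  with i(1) show ?thesis
    by blast
qed

lemma limit_move_inP_at: "inP_at k (limit_move H a) (limit_gam H a)"
proof (rule inP_atI)
  let ?q = "limit_move H a" and ?\<gamma> = "limit_gam H a"
  fix b i
  assume "oLimit r b" "lt b ?\<gamma>" "le (idx ?q ?\<gamma>) i" "lt i k" "b \<in> derivedSet r (cl ?q ?\<gamma> i)"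
  then show "le (idx ?q b) i \<and> cl ?q ?\<gamma> i \<inter> {d. lt d b} = cl ?q b i"
    using limit_top_cl_coherent by (simp add: limit_move_simps)
next
  let ?q = "limit_move H a" and ?\<gamma> = "limit_gam H a"
  fix b
  assume "oLimit r b" "lt b ?\<gamma>"
  then show "\<exists>i. le (idx ?q ?\<gamma>) i \<and> lt i k \<and> b \<in> derivedSet r (cl ?q ?\<gamma> i)"
    using limit_top_cl_covers by (simp add: limit_move_simps)
next
  let ?q = "limit_move H a" and ?\<gamma> = "limit_gam H a"
  fix i i'
  assume "le (idx ?q ?\<gamma>) i" "lt i i'" "lt i' k"
  then show "cl ?q ?\<gamma> i \<subseteq> cl ?q ?\<gamma> i'"
    using lt_trans[of i i' k] even_top_cl_mono[OF _ lt_imp_le]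
    by (simp add: limit_move_simps limit_top_cl_eq) blast
qed (use limit_top_cl_clubIn ord0_lt_k in \<open>simp_all add: limit_move_simps limit_top_cl_def\<close>)

lemma limit_move_inP: "inP r k (limit_move H a)"
proof (rule inP_extend_top)
  let ?q = "limit_move H a" and ?\<gamma> = "limit_gam H a"
  show "oLimit r ?\<gamma>" "gam ?q = ?\<gamma>"
    by (simp_all add: limit_gam_limit limit_move_simps)
  show "inP_at k ?q ?\<gamma>"
    by (rule limit_move_inP_at)
  show "\<exists>p. inP r k p \<and> le b (gam p) \<and> (\<forall>y. le y b \<longrightarrow> idx ?q y = idx p y \<and> cl ?q y = cl p y)"
    if b: "oLimit r b" "lt b ?\<gamma>" for b
  proof -
    obtain e where e: "e \<in> even_stages a" "lt b (gam (H e))"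
      using ex_even_stage_gam_gt[OF b(2)] by blast
    then show ?thesis
      using H_inP[OF even_stage_lt[OF e(1)]] limit_move_agree[OF even_stage_lt[OF e(1)]]
        le_trans[OF _ lt_imp_le[OF e(2)]] lt_imp_le[OF e(2)] by blast
  qed
  show "idx ?q x = undefined \<and> (\<forall>i. cl ?q x i = {})"
    if x: "\<not> (oLimit r x \<and> le x ?\<gamma>)" for x
  proof (cases "lt x ?\<gamma>")
    case True
    then obtain e where e: "e \<in> even_stages a" "lt x (gam (H e))"
      using ex_even_stage_gam_gt by blast
    have "\<not> (oLimit r x \<and> le x (gam (H e)))"
      using x lt_imp_le[OF True] by simp
    then show ?thesis
      using limit_move_agree[OF even_stage_lt[OF e(1)] lt_imp_le[OF e(2)]]
        inP_idx_outside[OF H_inP[OF even_stage_lt[OF e(1)]]]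
        inP_cl_outside[OF H_inP[OF even_stage_lt[OF e(1)]]] by simp
  next
    case False
    then have "x \<noteq> ?\<gamma>"
      using x limit_gam_limit by auto
    with False show ?thesis
      by (simp add: limit_move_simps)
  qed
qed

lemma limit_move_leP: "lt d a \<Longrightarrow> leP r k (limit_move H a) (H d)"
  using limit_gam_ub limit_move_agree by (intro leP_if_agree) (simp_all add: limit_move_simps)

end

section \<open>The winning strategy\<close>

definition opred :: "'a \<Rightarrow> 'a" where
  "opred a = (THE b. oSucc r b a)"

lemma opred_eq: "oSucc r b a \<Longrightarrow> opred a = b"
  unfolding opred_def using oSucc_pred_unique by blast

definition strategy :: "'a \<Rightarrow> ('a \<Rightarrow> 'a cond) \<Rightarrow> 'a cond" where
  "strategy a H =
     (if oLimit r a then limit_move H a else succ_move (H (opred (opred a))) (H (opred a)))"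

abbreviation legal :: "('a \<Rightarrow> 'a cond) \<Rightarrow> 'a \<Rightarrow> bool" where
  "legal h a \<equiv> legalPartial r (PP r k) (leP r k) (oneP r) strategy h a"

lemma legalD:
  assumes "legal h a"
  shows "lt d a \<Longrightarrow> inP r k (h d)"
    and "lt d d' \<Longrightarrow> lt d' a \<Longrightarrow> leP r k (h d') (h d)"
    and "lt d a \<Longrightarrow> ozero r d \<Longrightarrow> h d = oneP r"
    and "lt d a \<Longrightarrow> oEven r d \<Longrightarrow> \<not> ozero r d \<Longrightarrow> h d = strategy d (hist r h d)"
  using assms unfolding legalPartial_def PP_def by auto

lemma legal_below: "legal h a \<Longrightarrow> lt d a \<Longrightarrow> legal h d"
  unfolding legalPartial_def using lt_trans by blast

lemma hist_below: "lt d a \<Longrightarrow> hist r h a d = h d"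
  unfolding hist_def by simp

definition good_reply :: "'a \<Rightarrow> ('a \<Rightarrow> 'a cond) \<Rightarrow> 'a cond \<Rightarrow> bool" where
  "good_reply a h q \<longleftrightarrow> inP r k q \<and> (\<forall>d. lt d a \<longrightarrow> leP r k q (h d))
     \<and> oLimit r (gam q) \<and> idx q (gam q) = ord0
     \<and> (\<forall>d. lt d a \<longrightarrow> lt (gam (h d)) (gam q))
     \<and> (\<forall>e\<in>even_stages a. gam (h e) \<in> derivedSet r (cl q (gam q) ord0))"

lemma legal_limit_move_hyps:
  assumes legal: "legal h a" and IH: "\<And>e. e \<in> even_stages a \<Longrightarrow> good_reply e h (h e)"
  shows "lt d a \<Longrightarrow> inP r k (hist r h a d)"
    and "lt d d' \<Longrightarrow> lt d' a \<Longrightarrow> leP r k (hist r h a d') (hist r h a d)"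
    and "e \<in> even_stages a \<Longrightarrow> oLimit r (gam (hist r h a e))"
    and "e \<in> even_stages a \<Longrightarrow> idx (hist r h a e) (gam (hist r h a e)) = ord0"
    and "e \<in> even_stages a \<Longrightarrow> lt d e \<Longrightarrow> lt (gam (hist r h a d)) (gam (hist r h a e))"
    and "e \<in> even_stages a \<Longrightarrow> e' \<in> even_stages a \<Longrightarrow> lt e' e \<Longrightarrow>
      gam (hist r h a e') \<in> derivedSet r (cl (hist r h a e) (gam (hist r h a e)) ord0)"
proof -
  show "lt d a \<Longrightarrow> inP r k (hist r h a d)"
    by (simp add: legalD(1)[OF legal] hist_below)
  show "lt d d' \<Longrightarrow> lt d' a \<Longrightarrow> leP r k (hist r h a d') (hist r h a d)"
    using legalD(2)[OF legal] hist_below lt_trans by metis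
  assume e: "e \<in> even_stages a"
  have "hist r h a e = h e"
    using hist_below[OF even_stage_lt[OF e]] .
  then have IH': "good_reply e h (hist r h a e)"
    using IH[OF e] by simp
  then show "oLimit r (gam (hist r h a e))" "idx (hist r h a e) (gam (hist r h a e)) = ord0"
    unfolding good_reply_def by simp_all
  show "lt (gam (hist r h a d)) (gam (hist r h a e))" if "lt d e"
    using IH' that hist_below[where h = h, OF lt_trans[OF that even_stage_lt[OF e]]]
    unfolding good_reply_def
    by simp
  assume e': "e' \<in> even_stages a" "lt e' e"
  then have "e' \<in> even_stages e"
    unfolding even_stages_def by simp
  then show "gam (hist r h a e') \<in> derivedSet r (cl (hist r h a e) (gam (hist r h a e)) ord0)"
    using IH' hist_below[where h = h, OF even_stage_lt[OF e'(1)]] unfolding good_reply_def by simp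
qed

lemma limit_reply_good:
  assumes a: "oLimit r a" and legal: "legal h a"
    and IH: "\<And>e. e \<in> even_stages a \<Longrightarrow> good_reply e h (h e)"
  shows "good_reply a h (limit_move (hist r h a) a)"
proof -
  note limit_assms = a legal_limit_move_hyps[OF legal IH]
  let ?q = "limit_move (hist r h a) a"
  show ?thesis
    unfolding good_reply_def
  proof (intro conjI allI impI ballI)
    show "inP r k ?q"
      using limit_move_inP[where H = "hist r h a" and a = a, OF limit_assms] .
    show "oLimit r (gam ?q)"
      using limit_gam_limit[where H = "hist r h a" and a = a, OF limit_assms]
      by (simp add: limit_move_simps)
    show "idx ?q (gam ?q) = ord0"
      by (simp add: limit_move_simps)
  next
    fix d
    assume d: "lt d a"
    then have "hist r h a d = h d"
      by (rule hist_below)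
    then show "leP r k ?q (h d)" "lt (gam (h d)) (gam ?q)"
      using limit_move_leP[where H = "hist r h a" and a = a, OF limit_assms d]
        gam_lt_limit_gam[where H = "hist r h a" and a = a, OF limit_assms d]
      by (simp_all add: limit_move_simps)
  next
    fix e
    assume e: "e \<in> even_stages a"
    then have "hist r h a e = h e"
      using hist_below[OF even_stage_lt] by blast
    then show "gam (h e) \<in> derivedSet r (cl ?q (gam ?q) ord0)"
      using gam_in_derivedSet_limit_top_cl[where H = "hist r h a" and a = a, OF limit_assms e
          ord0_lt_k]
      by (simp add: limit_move_simps)
  qed
qed

lemma legal_succ_move_hyps:
  assumes c: "oEven r c" "oSucc r c b" "oSucc r b a" and legal: "legal h a"
    and IH: "\<And>e. e \<in> even_stages a \<Longrightarrow> good_reply e h (h e)"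
  shows "inP r k (h c)" "inP r k (h b)" "leP r k (h b) (h c)"
    and "oLimit r (gam (h c)) \<Longrightarrow> idx (h c) (gam (h c)) = ord0"
proof -
  have ba: "lt b a" and cb: "lt c b" and ca: "lt c a"
    using oSucc_lt[OF c(3)] oSucc_lt[OF c(2)] lt_trans by blast+
  show "inP r k (h c)" "inP r k (h b)" "leP r k (h b) (h c)"
    using legalD(1,2)[OF legal] ba ca cb by blast+
  assume lim: "oLimit r (gam (h c))"
  show "idx (h c) (gam (h c)) = ord0"
  proof (cases "ozero r c")
    case True
    then have "h c = oneP r"
      using legalD(3)[OF legal ca] by simp
    then show ?thesis
      using lim gam_oneP ozero_ord0 limit_not_zero by simp
  next
    case False
    then have "c \<in> even_stages a"
      using c(1) ca unfolding even_stages_def by simp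
    then show ?thesis
      using IH unfolding good_reply_def by simp
  qed
qed

lemma succ_reply_threads:
  assumes c: "oEven r c" "oSucc r c b" "oSucc r b a" and legal: "legal h a"
    and IH: "\<And>e. e \<in> even_stages a \<Longrightarrow> good_reply e h (h e)"
    and e: "e \<in> even_stages a"
  shows "gam (h e) \<in> derivedSet r (succ_top_cl (h c) (h b) ord0)"
proof -
  note succ_assms = legal_succ_move_hyps[OF c legal IH]
  have "e \<noteq> b"
    using e oSucc_oEven_not_oEven[OF c(1,2)] unfolding even_stages_def by blast
  then have "le e c"
    using le_of_lt_oSucc[OF c(2)] le_of_lt_oSucc[OF c(3) even_stage_lt[OF e]] le_neq_lt by blast
  show ?thesis
  proof (cases "e = c")
    case True
    then show ?thesis
      using IH[OF e] succ_top_cl_threads_pc(1)[OF succ_assms] unfolding good_reply_def by simp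
  next
    case False
    then have "lt e c"
      using \<open>le e c\<close> le_neq_lt by blast
    then have "c \<in> even_stages a"
      using c(1) lt_not_zero lt_trans[OF _ oSucc_lt[OF c(3)]] oSucc_lt[OF c(2)]
      unfolding even_stages_def by blast
    moreover have "e \<in> even_stages c"
      using e \<open>lt e c\<close> unfolding even_stages_def by simp
    ultimately have "gam (h e) \<in> derivedSet r (cl (h c) (gam (h c)) ord0)"
      and "lt (gam (h e)) (gam (h c))" and "oLimit r (gam (h c))"
      using IH \<open>lt e c\<close> unfolding good_reply_def by blast+
    then show ?thesis
      using derivedSet_Int_below[OF _ succ_top_cl_threads_pc(2)[OF succ_assms, symmetric]] by simp
  qed
qed

lemma succ_reply_good:
  assumes c: "oEven r c" "oSucc r c b" "oSucc r b a" and legal: "legal h a"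
    and IH: "\<And>e. e \<in> even_stages a \<Longrightarrow> good_reply e h (h e)"
  shows "good_reply a h (succ_move (h c) (h b))"
proof -
  note succ_assms = legal_succ_move_hyps[OF c legal IH]
  let ?q = "succ_move (h c) (h b)"
  have ba: "lt b a"
    using oSucc_lt[OF c(3)] .
  have le_b: "le d b" if "lt d a" for d
    using le_of_lt_oSucc[OF c(3) that] .
  have q_le: "leP r k ?q (h d)" if d: "lt d a" for d
  proof (cases "d = b")
    case False
    then have "lt d b"
      using le_b[OF d] le_neq_lt by blast
    then show ?thesis
      using leP_trans[OF legalD(1)[OF legal d] succ_assms(2) succ_move_inP[OF succ_assms]
          succ_move_leP[OF succ_assms] legalD(2)[OF legal _ ba]] by blast
  qed (use succ_move_leP[OF succ_assms] in simp)
  have q_gt: "lt (gam (h d)) (gam ?q)" if d: "lt d a" for d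
  proof -
    have "le (gam (h d)) (gam (h b))"
      using legalD(2)[OF legal _ ba] le_b[OF d] le_neq_lt unfolding leP_def by (cases "d = b") auto
    then show ?thesis
      using le_lt_trans next_limit(2) by (simp add: succ_move_simps)
  qed
  show ?thesis
    unfolding good_reply_def
    using succ_move_inP[OF succ_assms] q_le q_gt succ_reply_threads[OF c legal IH] next_limit(1)
    by (simp add: succ_move_simps)
qed

lemma strategy_good:
  "oEven r a \<Longrightarrow> \<not> ozero r a \<Longrightarrow> legal h a \<Longrightarrow> good_reply a h (strategy a (hist r h a))"
proof (induct a rule: lt_induct)
  case (less a)
  have IH: "good_reply e h (h e)" if e: "e \<in> even_stages a" for e
  proof -
    have "lt e a" "oEven r e" "\<not> ozero r e"
      using e unfolding even_stages_def by simp_all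
    then show ?thesis
      using less.hyps legal_below[OF less.prems(3)] legalD(4)[OF less.prems(3)] by metis
  qed
  from less.prems(1) show ?case
  proof (cases rule: oEven_cases)
    case 1
    with less.prems(2) show ?thesis
      by simp
  next
    case 2
    then show ?thesis
      using limit_reply_good[OF _ less.prems(3) IH] by (simp add: strategy_def)
  next
    case (3 c b)
    then have "opred a = b" "opred b = c" "lt b a" "lt c a"
      using opred_eq oSucc_lt lt_trans by blast+
    with 3 show ?thesis
      using succ_reply_good[OF 3 less.prems(3) IH] oSucc_not_limit
      by (simp add: strategy_def hist_below)
  qed
qed

lemma strategy_winning: "winningII r (PP r k) (leP r k) (oneP r) strategy"
  unfolding winningII_def
  using strategy_good unfolding good_reply_def PP_def by blast

end

theorem mainTheorem19:
  fixes r :: "'a rel" and k :: 'a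
  assumes "card_order r" and "Cinfinite r" and "regularCard r"
    and "Card_order (Restr r (underS r k))"
    and "Cinfinite (Restr r (underS r k))"
    and "regularCard (Restr r (underS r k))"
  shows "strategically_closed r (PP r k) (leP r k) (oneP r)"
proof -
  have "well_order_on UNIV r"
    using assms(1) card_order_on_well_order_on by blast
  moreover have "infinite (underS r k)"
    using assms(5) finite_subset[of "Field (Restr r (underS r k))" "underS r k"]
    unfolding cinfinite_def Field_def by auto
  ultimately interpret regular_universe r k
    using assms(1,3) by unfold_locales
  show ?thesis
    unfolding strategically_closed_def using strategy_winning by blast
qed

end
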